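(* Let $x_0\in(0,1)$ and let $a,b,\lambda$ satisfy condition (H) and, with Dirichlet boundary conditions, $\lambda\neq0$ and $\lambda<1/C^*$. Then there exists $\Lambda>0$ such that for all $u\in\mathcal K$, \[\int_0^1(u'(x))^2dx-\lambda\int_0^1\frac{u^2(x)}{a(x)b(x)}dx\ge\Lambda\|u\|^2_{\mathcal K}.\]
   Context: $a,b:[0,1]\to\mathbb R$ with $a(x_0)=b(x_0)=0$, $a,b>0$ on $[0,1]\setminus\{x_0\}$. Degeneracy types: (WWD) $a,b\in W^{1,1}(0,1)$, $K_1,K_2\in(0,1)$ with $(x-x_0)a'\le K_1a$, $(x-x_0)b'\le K_2b$ a.e.; (SSD) $a,b\in W^{1,\infty}$, same with $K_1,K_2\in[1,2)$; (WSD) $a\in W^{1,1}$, $b\in W^{1,\infty}$, $K_1\in(0,1)$, $K_2\in[1,2)$; (SWD) $a\in W^{1,\infty}$, $b\in W^{1,1}$, $K_1\in[1,2)$, $K_2\in(0,1)$. Condition (H): one of (H1) (WWD) with $K_1+K_2<1$; (H2) (WWD) with $1\le K_1+K_2\le2$ and $c_1,c_2>0$ with $|x-x_0|^{K_1}\ge c_1a$, $|x-x_0|^{K_2}\ge c_2b$ on $[0,1]$; (H3) (WSD) or (SWD) with $K_1+K_2\le2$ and such $c_1,c_2$; (H4) (SSD) with $K_1=K_2=1$. $L^2_{\frac1a}(0,1)=\{u\in L^2:\int u^2/a<\infty\}$; $\mathcal K_a=L^2_{\frac1a}(0,1)\cap H^1_0(0,1)$ with $\|u\|^2=\int u^2/a+\int(u')^2$;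 $\mathcal K_{a,b}=\{u\in\mathcal K_a:u/\sqrt{ab}\in L^2\}$ with $\|u\|^2=\int u^2/a+\int(u')^2+\int u^2/(ab)$. $\mathcal K=\mathcal K_a$ under (H1) and $\mathcal K=\mathcal K_{a,b}$ under (H2)–(H4). $C^*$ is the best constant $C$ in $\int_0^1u^2/(ab)\le C\int_0^1(u')^2$ for $u\in\mathcal K$. *)

theory Defs
  imports "HOL-Analysis.Analysis"
begin

definition I01 :: "(real \<Rightarrow> real) \<Rightarrow> real" where
  "I01 f = set_lebesgue_integral lborel {0..1} f"

(* f \<in> W^{1,1}(0,1) with (weak) derivative g: g \<in> L^1(0,1) and f is the primitive of g on [0,1] *)
definition W11_deriv :: "(real \<Rightarrow> real) \<Rightarrow> (real \<Rightarrow> real) \<Rightarrow> bool" where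
  "W11_deriv f g \<longleftrightarrow> set_integrable lborel {0..1} g \<and>
     (\<forall>x\<in>{0..1}. f x = f 0 + set_lebesgue_integral lborel {0..x} g)"

definition W1inf_deriv :: "(real \<Rightarrow> real) \<Rightarrow> (real \<Rightarrow> real) \<Rightarrow> bool" where
  "W1inf_deriv f g \<longleftrightarrow> W11_deriv f g \<and>
     (\<exists>M. AE x in lborel. x \<in> {0..1} \<longrightarrow> \<bar>g x\<bar> \<le> M)"

definition weak_deg :: "real \<Rightarrow> (real \<Rightarrow> real) \<Rightarrow> real \<Rightarrow> bool" where
  "weak_deg x0 f K \<longleftrightarrow> 0 < K \<and> K < 1 \<and>
     (\<exists>g. W11_deriv f g \<and> (AE x in lborel. x \<in> {0..1} \<longrightarrow> (x - x0) * g x \<le> K * f x))"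

definition strong_deg :: "real \<Rightarrow> (real \<Rightarrow> real) \<Rightarrow> real \<Rightarrow> bool" where
  "strong_deg x0 f K \<longleftrightarrow> 1 \<le> K \<and> K < 2 \<and>
     (\<exists>g. W1inf_deriv f g \<and> (AE x in lborel. x \<in> {0..1} \<longrightarrow> (x - x0) * g x \<le> K * f x))"

definition basic_ab :: "real \<Rightarrow> (real \<Rightarrow> real) \<Rightarrow> (real \<Rightarrow> real) \<Rightarrow> bool" where
  "basic_ab x0 a b \<longleftrightarrow> a x0 = 0 \<and> b x0 = 0 \<and>
     (\<forall>x\<in>{0..1} - {x0}. 0 < a x \<and> 0 < b x)"

definition growth :: "real \<Rightarrow> (real \<Rightarrow> real) \<Rightarrow> (real \<Rightarrow> real) \<Rightarrow> real \<Rightarrow> real \<Rightarrow> bool" where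
  "growth x0 a b K1 K2 \<longleftrightarrow> (\<exists>c1>0. \<exists>c2>0. \<forall>x\<in>{0..1}.
     \<bar>x - x0\<bar> powr K1 \<ge> c1 * a x \<and> \<bar>x - x0\<bar> powr K2 \<ge> c2 * b x)"

definition H1 :: "real \<Rightarrow> (real \<Rightarrow> real) \<Rightarrow> (real \<Rightarrow> real) \<Rightarrow> real \<Rightarrow> real \<Rightarrow> bool" where
  "H1 x0 a b K1 K2 \<longleftrightarrow> weak_deg x0 a K1 \<and> weak_deg x0 b K2 \<and> K1 + K2 < 1"

definition H2 :: "real \<Rightarrow> (real \<Rightarrow> real) \<Rightarrow> (real \<Rightarrow> real) \<Rightarrow> real \<Rightarrow> real \<Rightarrow> bool" where
  "H2 x0 a b K1 K2 \<longleftrightarrow> weak_deg x0 a K1 \<and> weak_deg x0 b K2 \<and> 1 \<le> K1 + K2 \<and> K1 + K2 \<le> 2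
     \<and> growth x0 a b K1 K2"

definition H3 :: "real \<Rightarrow> (real \<Rightarrow> real) \<Rightarrow> (real \<Rightarrow> real) \<Rightarrow> real \<Rightarrow> real \<Rightarrow> bool" where
  "H3 x0 a b K1 K2 \<longleftrightarrow>
     ((weak_deg x0 a K1 \<and> strong_deg x0 b K2) \<or> (strong_deg x0 a K1 \<and> weak_deg x0 b K2))
     \<and> K1 + K2 \<le> 2 \<and> growth x0 a b K1 K2"

definition H4 :: "real \<Rightarrow> (real \<Rightarrow> real) \<Rightarrow> (real \<Rightarrow> real) \<Rightarrow> real \<Rightarrow> real \<Rightarrow> bool" where
  "H4 x0 a b K1 K2 \<longleftrightarrow> strong_deg x0 a K1 \<and> strong_deg x0 b K2 \<and> K1 = 1 \<and> K2 = 1"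

definition condH :: "real \<Rightarrow> (real \<Rightarrow> real) \<Rightarrow> (real \<Rightarrow> real) \<Rightarrow> real \<Rightarrow> real \<Rightarrow> bool" where
  "condH x0 a b K1 K2 \<longleftrightarrow> H1 x0 a b K1 K2 \<or> H2 x0 a b K1 K2 \<or> H3 x0 a b K1 K2 \<or> H4 x0 a b K1 K2"

(* u \<in> H^1_0(0,1) with derivative u' (u the absolutely continuous representative) *)
definition H10 :: "(real \<Rightarrow> real) \<Rightarrow> (real \<Rightarrow> real) \<Rightarrow> bool" where
  "H10 u u' \<longleftrightarrow> set_borel_measurable lborel {0..1} u' \<and>
     set_integrable lborel {0..1} (\<lambda>x. (u' x)\<^sup>2) \<and>
     (\<forall>x\<in>{0..1}. u x = set_lebesgue_integral lborel {0..x} u') \<and> u 0 = 0 \<and> u 1 = 0"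

definition Ka_mem :: "(real \<Rightarrow> real) \<Rightarrow> (real \<Rightarrow> real) \<Rightarrow> (real \<Rightarrow> real) \<Rightarrow> bool" where
  "Ka_mem a u u' \<longleftrightarrow> H10 u u' \<and> set_integrable lborel {0..1} (\<lambda>x. (u x)\<^sup>2 / a x)"

definition Kab_mem :: "(real \<Rightarrow> real) \<Rightarrow> (real \<Rightarrow> real) \<Rightarrow> (real \<Rightarrow> real) \<Rightarrow> (real \<Rightarrow> real) \<Rightarrow> bool" where
  "Kab_mem a b u u' \<longleftrightarrow> Ka_mem a u u' \<and>
     set_integrable lborel {0..1} (\<lambda>x. (u x)\<^sup>2 / (a x * b x))"

definition K_mem :: "real \<Rightarrow> (real \<Rightarrow> real) \<Rightarrow> (real \<Rightarrow> real) \<Rightarrow> real \<Rightarrow> real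
    \<Rightarrow> (real \<Rightarrow> real) \<Rightarrow> (real \<Rightarrow> real) \<Rightarrow> bool" where
  "K_mem x0 a b K1 K2 u u' \<longleftrightarrow>
     (if H1 x0 a b K1 K2 then Ka_mem a u u' else Kab_mem a b u u')"

definition K_normsq :: "real \<Rightarrow> (real \<Rightarrow> real) \<Rightarrow> (real \<Rightarrow> real) \<Rightarrow> real \<Rightarrow> real
    \<Rightarrow> (real \<Rightarrow> real) \<Rightarrow> (real \<Rightarrow> real) \<Rightarrow> real" where
  "K_normsq x0 a b K1 K2 u u' =
     (if H1 x0 a b K1 K2
      then I01 (\<lambda>x. (u x)\<^sup>2 / a x) + I01 (\<lambda>x. (u' x)\<^sup>2)
      else I01 (\<lambda>x. (u x)\<^sup>2 / a x) + I01 (\<lambda>x. (u' x)\<^sup>2) + I01 (\<lambda>x. (u x)\<^sup>2 / (a x * b x)))"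

definition C_star :: "real \<Rightarrow> (real \<Rightarrow> real) \<Rightarrow> (real \<Rightarrow> real) \<Rightarrow> real \<Rightarrow> real \<Rightarrow> real" where
  "C_star x0 a b K1 K2 = Inf {C. \<forall>u u'. K_mem x0 a b K1 K2 u u' \<longrightarrow>
      I01 (\<lambda>x. (u x)\<^sup>2 / (a x * b x)) \<le> C * I01 (\<lambda>x. (u' x)\<^sup>2)}"

end

theory Submission
  imports Defs
begin

text \<open>
  Condition (H) makes the weights comparable to powers of \<open>\<bar>x - x0\<bar>\<close>: the differential
  inequality \<open>(x - x0) a' \<le> K1 a\<close> integrates (Gronwall) to \<open>a x \<ge> c * \<bar>x - x0\<bar> powr K1\<close>,
  and similarly for \<open>b\<close>. If \<open>K1 + K2 < 1\<close>, the singularities of \<open>1 / (a b)\<close> and \<open>1 / a\<close>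
  are integrable and the bound \<open>u\<^sup>2 \<le> \<integral> u'\<^sup>2\<close> already controls \<open>\<integral> u\<^sup>2 / (a b)\<close> and \<open>\<integral> u\<^sup>2 / a\<close>.
  Otherwise \<open>a b \<le> C \<bar>x - x0\<bar>\<close>, so every \<open>u \<in> \<K>\<^sub>a\<^sub>,\<^sub>b\<close> vanishes at \<open>x0\<close>, while
  \<open>a b \<ge> c (x - x0)\<^sup>2\<close>; Hardy's inequality \<open>\<integral> u\<^sup>2 / (x - x0)\<^sup>2 \<le> 8 \<integral> u'\<^sup>2\<close> then bounds
  \<open>\<integral> u\<^sup>2 / (a b)\<close>, and \<open>\<integral> u\<^sup>2 / a \<le> max b \<cdot> \<integral> u\<^sup>2 / (a b)\<close>. In both cases
  \<open>\<integral> u\<^sup>2 / (a b) \<le> C \<integral> u'\<^sup>2\<close> and \<open>\<parallel>u\<parallel>\<^sup>2 \<le> C \<integral> u'\<^sup>2\<close>, so the best constant \<open>C\<^sup>*\<close> is finite, and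
  for \<open>0 < \<lambda> < 1 / C\<^sup>*\<close> the form is at least \<open>(1 - \<lambda> C\<^sup>*) \<integral> u'\<^sup>2 \<ge> ((1 - \<lambda> C\<^sup>*) / C) \<parallel>u\<parallel>\<^sup>2\<close>;
  for \<open>\<lambda> \<le> 0\<close> it is at least \<open>\<integral> u'\<^sup>2 \<ge> \<parallel>u\<parallel>\<^sup>2 / C\<close>.
\<close>

section \<open>Lebesgue integrals on the real line\<close>

lemma nn_integral_eq_set_integral_nonneg:
  fixes f :: "'a \<Rightarrow> real"
  assumes "set_integrable M S f" "\<And>x. x \<in> S \<Longrightarrow> 0 \<le> f x"
  shows "(\<integral>\<^sup>+x. indicator S x * ennreal (f x) \<partial>M) = ennreal (LINT x:S|M. f x)"
proof -
  have "integrable M (\<lambda>x. indicator S x * f x)"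
    using assms(1) unfolding set_integrable_def by simp
  then have "(\<integral>\<^sup>+x. ennreal (indicator S x * f x) \<partial>M) = ennreal (integral\<^sup>L M (\<lambda>x. indicator S x * f x))"
    by (rule nn_integral_eq_integral) (use assms(2) in \<open>auto simp: indicator_def\<close>)
  moreover have "ennreal (indicator S x * f x) = indicator S x * ennreal (f x)" for x
    by (auto simp: indicator_def)
  ultimately show ?thesis unfolding set_lebesgue_integral_def by simp
qed

lemma set_integral_le_of_nn_integral_le:
  fixes f :: "'a \<Rightarrow> real"
  assumes "\<And>x. x \<in> S \<Longrightarrow> 0 \<le> f x" "0 \<le> c"
    and "(\<integral>\<^sup>+x. indicator S x * ennreal (f x) \<partial>M) \<le> ennreal c"
  shows "(LINT x:S|M. f x) \<le> c"
proof cases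
  assume "set_integrable M S f"
  then show ?thesis
    using nn_integral_eq_set_integral_nonneg[of M S f] assms by (simp add: ennreal_le_iff)
next
  assume "\<not> set_integrable M S f"
  then show ?thesis using assms(2)
    unfolding set_integrable_def set_lebesgue_integral_def by (simp add: not_integrable_integral_eq)
qed

lemma nn_integral_indicator_has_integral:
  fixes f :: "real \<Rightarrow> real"
  assumes "f \<in> borel_measurable borel" "(f has_integral I) {a..b}" "\<And>x. x \<in> {a..b} \<Longrightarrow> 0 \<le> f x"
  shows "(\<integral>\<^sup>+x. indicator {a..b} x * ennreal (f x) \<partial>lborel) = ennreal I"
proof -
  have eq: "(\<lambda>x. indicator {a..b} x * f x) = (\<lambda>x. if x \<in> {a..b} then f x else 0)"
    by (auto simp: indicator_def)
  have "((\<lambda>x. indicator {a..b} x * f x) has_integral I) UNIV"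
    unfolding eq has_integral_restrict_UNIV by (rule assms(2))
  then have "(\<integral>\<^sup>+x. ennreal (indicator {a..b} x * f x) \<partial>lborel) = ennreal I"
    by (rule nn_integral_has_integral_lborel[rotated 2]) (use assms in \<open>auto simp: indicator_def\<close>)
  moreover have "ennreal (indicator {a..b} x * f x) = indicator {a..b} x * ennreal (f x)" for x
    by (auto simp: indicator_def)
  ultimately show ?thesis by simp
qed

lemma nn_integral_reflect:
  fixes f :: "real \<Rightarrow> ennreal"
  assumes "f \<in> borel_measurable borel"
  shows "(\<integral>\<^sup>+x. f x \<partial>lborel) = (\<integral>\<^sup>+x. f (- x) \<partial>lborel)"
  using nn_integral_real_affine[OF assms, of "-1" 0] by simp

lemma nn_integral_indicator_reflect:
  fixes f :: "real \<Rightarrow> ennreal"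
  assumes "(\<lambda>x. indicator A x * f x) \<in> borel_measurable borel"
  shows "(\<integral>\<^sup>+x. indicator A x * f x \<partial>lborel) = (\<integral>\<^sup>+x. indicator (uminus ` A) x * f (- x) \<partial>lborel)"
  unfolding nn_integral_reflect[OF assms]
  by (intro nn_integral_cong) (auto simp: indicator_def image_iff minus_equation_iff)

lemma nn_integral_powr_shift:
  fixes x0 x p :: real
  assumes "-1 < p" "x0 \<le> x"
  shows "(\<integral>\<^sup>+y. indicator {x0..x} y * ennreal ((y - x0) powr p) \<partial>lborel)
    = ennreal ((x - x0) powr (p + 1) / (p + 1))"
proof -
  have "(\<integral>\<^sup>+y. indicator {x0..x} y * ennreal ((y - x0) powr p) \<partial>lborel)
     = (\<integral>\<^sup>+y. indicator {x0..x} (x0 + 1 * y) * ennreal ((x0 + 1 * y - x0) powr p) \<partial>lborel)"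
    by (subst nn_integral_real_affine[where c=1 and t=x0]) auto
  also have "\<dots> = (\<integral>\<^sup>+y. indicator {0..x - x0} y * ennreal (y powr p) \<partial>lborel)"
    by (intro nn_integral_cong) (auto simp: indicator_def)
  also have "\<dots> = ennreal ((x - x0) powr (p + 1) / (p + 1))"
    using assms by (intro nn_integral_indicator_has_integral has_integral_powr_from_0) auto
  finally show ?thesis .
qed

lemma nn_integral_powr_minus_three_halves:
  fixes x0 y e :: real
  assumes "x0 < y" "y \<le> e"
  shows "(\<integral>\<^sup>+x. indicator {y..e} x * ennreal ((x - x0) powr (-3/2)) \<partial>lborel)
    = ennreal (2 * (y - x0) powr (-1/2) - 2 * (e - x0) powr (-1/2))"
proof (rule nn_integral_indicator_has_integral)
  have "((\<lambda>x. -2 * (x - x0) powr (-1/2)) has_real_derivative (x - x0) powr (-3/2)) (at x)"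
    if "x \<in> {y..e}" for x
    using that assms by (auto intro!: derivative_eq_intros)
  then show "((\<lambda>x. (x - x0) powr (-3/2)) has_integral 2 * (y - x0) powr (-1/2) - 2 * (e - x0) powr (-1/2)) {y..e}"
    using fundamental_theorem_of_calculus[OF assms(2), of "\<lambda>x. -2 * (x - x0) powr (-1/2)"]
    by (simp add: has_real_derivative_iff_has_vector_derivative[symmetric] has_field_derivative_at_within)
qed auto

lemma nn_integral_inverse_shift:
  fixes x0 p q :: real
  assumes "x0 < p" "p \<le> q"
  shows "(\<integral>\<^sup>+x. indicator {p..q} x * ennreal (1 / (x - x0)) \<partial>lborel) = ennreal (ln (q - x0) - ln (p - x0))"
proof (rule nn_integral_indicator_has_integral)
  have "((\<lambda>x. ln (x - x0)) has_real_derivative 1 / (x - x0)) (at x)" if "x \<in> {p..q}" for x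
    using that assms by (auto intro!: derivative_eq_intros)
  then show "((\<lambda>x. 1 / (x - x0)) has_integral ln (q - x0) - ln (p - x0)) {p..q}"
    using fundamental_theorem_of_calculus[OF assms(2), of "\<lambda>x. ln (x - x0)"]
    by (simp add: has_real_derivative_iff_has_vector_derivative[symmetric] has_field_derivative_at_within)
qed (use assms in auto)

lemma nn_integral_inverse_shift_eq_top:
  assumes "0 < \<delta>"
  shows "(\<integral>\<^sup>+x. indicator {x0<..x0 + \<delta>} x * ennreal (1 / (x - x0)) \<partial>lborel) = top"
proof (rule ccontr)
  assume "(\<integral>\<^sup>+x. indicator {x0<..x0 + \<delta>} x * ennreal (1 / (x - x0)) \<partial>lborel) \<noteq> top"
  then obtain r where r: "(\<integral>\<^sup>+x. indicator {x0<..x0 + \<delta>} x * ennreal (1 / (x - x0)) \<partial>lborel) = ennreal r" "0 \<le> r"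
    by (cases "\<integral>\<^sup>+x. indicator {x0<..x0 + \<delta>} x * ennreal (1 / (x - x0)) \<partial>lborel") auto
  define \<epsilon> where "\<epsilon> = \<delta> * exp (- (r + 1))"
  have \<epsilon>: "0 < \<epsilon>" "\<epsilon> < \<delta>" using assms r(2) by (auto simp: \<epsilon>_def)
  have "ennreal (ln (x0 + \<delta> - x0) - ln (x0 + \<epsilon> - x0))
      = (\<integral>\<^sup>+x. indicator {x0 + \<epsilon>..x0 + \<delta>} x * ennreal (1 / (x - x0)) \<partial>lborel)"
    using \<epsilon> by (intro nn_integral_inverse_shift[symmetric]) auto
  also have "\<dots> \<le> ennreal r"
    unfolding r(1)[symmetric] using \<epsilon> by (intro nn_integral_mono) (auto simp: indicator_def)
  finally have "ln \<delta> - ln \<epsilon> \<le> r" using r(2) by (simp add: ennreal_le_iff)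
  moreover have "ln \<delta> - ln \<epsilon> = r + 1" using assms by (simp add: \<epsilon>_def ln_mult)
  ultimately show False by simp
qed

lemma nn_integral_abs_powr_le:
  fixes x0 \<gamma> :: real
  assumes x0: "0 < x0" "x0 < 1" and \<gamma>: "0 \<le> \<gamma>" "\<gamma> < 1"
  shows "(\<integral>\<^sup>+x. indicator {0..1} x * ennreal (\<bar>x - x0\<bar> powr (-\<gamma>)) \<partial>lborel)
    \<le> ennreal (x0 powr (1 - \<gamma>) / (1 - \<gamma>) + (1 - x0) powr (1 - \<gamma>) / (1 - \<gamma>))"
proof -
  have "(\<integral>\<^sup>+x. indicator {0..1} x * ennreal (\<bar>x - x0\<bar> powr (-\<gamma>)) \<partial>lborel)
    \<le> (\<integral>\<^sup>+x. indicator {0..x0} x * ennreal (\<bar>x - x0\<bar> powr (-\<gamma>))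
          + indicator {x0..1} x * ennreal (\<bar>x - x0\<bar> powr (-\<gamma>)) \<partial>lborel)"
    by (intro nn_integral_mono) (auto simp: indicator_def)
  also have "\<dots> = (\<integral>\<^sup>+x. indicator {0..x0} x * ennreal (\<bar>x - x0\<bar> powr (-\<gamma>)) \<partial>lborel)
      + (\<integral>\<^sup>+x. indicator {x0..1} x * ennreal (\<bar>x - x0\<bar> powr (-\<gamma>)) \<partial>lborel)"
    by (rule nn_integral_add) auto
  also have "(\<integral>\<^sup>+x. indicator {x0..1} x * ennreal (\<bar>x - x0\<bar> powr (-\<gamma>)) \<partial>lborel)
      = (\<integral>\<^sup>+x. indicator {x0..1} x * ennreal ((x - x0) powr (-\<gamma>)) \<partial>lborel)"
    by (intro nn_integral_cong) (auto simp: indicator_def)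
  also have "\<dots> = ennreal ((1 - x0) powr (1 - \<gamma>) / (1 - \<gamma>))"
    using nn_integral_powr_shift[of "-\<gamma>" x0 1] \<gamma> x0 by simp
  also have "(\<integral>\<^sup>+x. indicator {0..x0} x * ennreal (\<bar>x - x0\<bar> powr (-\<gamma>)) \<partial>lborel)
      = (\<integral>\<^sup>+x. indicator {0..x0} (-x) * ennreal (\<bar>-x - x0\<bar> powr (-\<gamma>)) \<partial>lborel)"
    by (rule nn_integral_reflect) measurable
  also have "\<dots> = (\<integral>\<^sup>+x. indicator {-x0..0} x * ennreal ((x - (-x0)) powr (-\<gamma>)) \<partial>lborel)"
    by (intro nn_integral_cong) (auto simp: indicator_def add.commute)
  also have "\<dots> = ennreal (x0 powr (1 - \<gamma>) / (1 - \<gamma>))"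
    using nn_integral_powr_shift[of "-\<gamma>" "-x0" 0] \<gamma> x0 by simp
  finally show ?thesis using \<gamma> by (simp add: ennreal_plus[symmetric] del: ennreal_plus)
qed

lemma Cauchy_Schwarz_nn_integral_weighted:
  fixes V w :: "'a \<Rightarrow> real"
  assumes [measurable]: "V \<in> borel_measurable M" "w \<in> borel_measurable M" "S \<in> sets M"
    and w: "AE x in M. x \<in> S \<longrightarrow> 0 < w x"
  shows "(\<integral>\<^sup>+x. indicator S x * ennreal \<bar>V x\<bar> \<partial>M)\<^sup>2
    \<le> (\<integral>\<^sup>+x. indicator S x * ennreal ((V x)\<^sup>2 * w x) \<partial>M) * (\<integral>\<^sup>+x. indicator S x * ennreal (1 / w x) \<partial>M)"
proof -
  define f where "f x = indicator S x * ennreal (\<bar>V x\<bar> * sqrt (w x))" for x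
  define g where "g x = indicator S x * ennreal (1 / sqrt (w x))" for x
  have "(\<integral>\<^sup>+x. indicator S x * ennreal \<bar>V x\<bar> \<partial>M) = (\<integral>\<^sup>+x. f x * g x \<partial>M)"
    using w by (intro nn_integral_cong_AE) (auto simp: f_def g_def indicator_def ennreal_mult[symmetric])
  also have "(\<dots>)\<^sup>2 \<le> (\<integral>\<^sup>+x. f x ^ 2 \<partial>M) * (\<integral>\<^sup>+x. g x ^ 2 \<partial>M)"
    by (rule Cauchy_Schwarz_nn_integral) (auto simp: f_def g_def)
  also have "(\<integral>\<^sup>+x. f x ^ 2 \<partial>M) = (\<integral>\<^sup>+x. indicator S x * ennreal ((V x)\<^sup>2 * w x) \<partial>M)"
    using w by (intro nn_integral_cong_AE)
      (auto simp: f_def indicator_def ennreal_power power_mult_distrib)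
  also have "(\<integral>\<^sup>+x. g x ^ 2 \<partial>M) = (\<integral>\<^sup>+x. indicator S x * ennreal (1 / w x) \<partial>M)"
    using w by (intro nn_integral_cong_AE)
      (auto simp: g_def indicator_def ennreal_power power_divide)
  finally show ?thesis .
qed

section \<open>Hardy's inequality\<close>

text \<open>Cauchy--Schwarz with the weight \<open>(y - x0) powr (1/2)\<close>; the factor \<open>2 * (x - x0) powr (1/2)\<close>
  is the integral of \<open>(y - x0) powr (-1/2)\<close> over \<open>[x0, x]\<close>.\<close>

lemma Hardy_pointwise:
  fixes U V :: "real \<Rightarrow> real"
  assumes x: "x0 < x" and V: "V \<in> borel_measurable borel"
    and U: "ennreal \<bar>U x\<bar> \<le> (\<integral>\<^sup>+y. indicator {x0..x} y * ennreal \<bar>V y\<bar> \<partial>lborel)"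
  shows "ennreal ((U x)\<^sup>2 / (x - x0)\<^sup>2)
    \<le> (\<integral>\<^sup>+y. ennreal (2 * (x - x0) powr (-3/2))
          * (indicator {x0..x} y * ennreal ((V y)\<^sup>2 * (y - x0) powr (1/2))) \<partial>lborel)"
proof -
  define P where "P = (\<integral>\<^sup>+y. indicator {x0..x} y * ennreal ((V y)\<^sup>2 * (y - x0) powr (1/2)) \<partial>lborel)"
  have "(\<integral>\<^sup>+y. indicator {x0..x} y * ennreal (1 / (y - x0) powr (1/2)) \<partial>lborel)
      = (\<integral>\<^sup>+y. indicator {x0..x} y * ennreal ((y - x0) powr (-1/2)) \<partial>lborel)"
    by (intro nn_integral_cong) (auto simp: indicator_def powr_minus_divide)
  also have "\<dots> = ennreal (2 * (x - x0) powr (1/2))"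
    using nn_integral_powr_shift[of "-1/2" x0 x] x by simp
  finally have weight: "(\<integral>\<^sup>+y. indicator {x0..x} y * ennreal (1 / (y - x0) powr (1/2)) \<partial>lborel)
      = ennreal (2 * (x - x0) powr (1/2))" .
  have "ennreal ((U x)\<^sup>2) = (ennreal \<bar>U x\<bar>)\<^sup>2" by (simp add: ennreal_power)
  also have "\<dots> \<le> (\<integral>\<^sup>+y. indicator {x0..x} y * ennreal \<bar>V y\<bar> \<partial>lborel)\<^sup>2"
    by (rule power_mono_ennreal[OF U])
  also have "\<dots> \<le> P * ennreal (2 * (x - x0) powr (1/2))"
    unfolding P_def weight[symmetric]
    by (rule Cauchy_Schwarz_nn_integral_weighted)
      (use V in \<open>auto intro: AE_mp[OF AE_lborel_singleton[of x0]]\<close>)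
  finally have U2: "ennreal ((U x)\<^sup>2) \<le> ennreal (2 * (x - x0) powr (1/2)) * P"
    by (simp add: mult.commute)
  have "-3/2 = 1/2 - (2::real)" by simp
  then have "(x - x0) powr (-3/2) = (x - x0) powr (1/2) / (x - x0)\<^sup>2"
    using x by (simp only: powr_diff powr_numeral)
  then have scale: "ennreal (2 * (x - x0) powr (1/2)) * ennreal (1 / (x - x0)\<^sup>2)
      = ennreal (2 * (x - x0) powr (-3/2))"
    by (simp add: ennreal_mult''[symmetric])
  have "ennreal ((U x)\<^sup>2 / (x - x0)\<^sup>2) = ennreal ((U x)\<^sup>2) * ennreal (1 / (x - x0)\<^sup>2)"
    by (simp add: ennreal_mult''[symmetric])
  also have "\<dots> \<le> ennreal (2 * (x - x0) powr (1/2)) * P * ennreal (1 / (x - x0)\<^sup>2)"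
    using U2 by (rule mult_right_mono) simp
  also have "\<dots> = ennreal (2 * (x - x0) powr (-3/2)) * P"
    using scale by (simp add: mult_ac)
  also have "\<dots> = (\<integral>\<^sup>+y. ennreal (2 * (x - x0) powr (-3/2))
      * (indicator {x0..x} y * ennreal ((V y)\<^sup>2 * (y - x0) powr (1/2))) \<partial>lborel)"
    unfolding P_def by (rule nn_integral_cmult[symmetric]) (use V in measurable)
  finally show ?thesis .
qed

text \<open>After Fubini, the kernel of \<open>Hardy_pointwise\<close> integrates in \<open>x\<close> to at most
  \<open>4 * (y - x0) powr (-1/2)\<close>, which cancels the weight \<open>(y - x0) powr (1/2)\<close>.\<close>

lemma Hardy_kernel_le:
  fixes v :: real
  shows "ennreal (v\<^sup>2 * (y - x0) powr (1/2))
      * (\<integral>\<^sup>+x. indicator {x0<..e} x * indicator {x0..x} y * ennreal (2 * (x - x0) powr (-3/2)) \<partial>lborel)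
    \<le> 4 * (indicator {x0..e} y * ennreal (v\<^sup>2))"
proof -
  consider "x0 < y" "y \<le> e" | "y = x0" | "y < x0 \<or> e < y" by fastforce
  then show ?thesis
  proof cases
    case 1
    have "(\<integral>\<^sup>+x. indicator {x0<..e} x * indicator {x0..x} y * ennreal (2 * (x - x0) powr (-3/2)) \<partial>lborel)
        = (\<integral>\<^sup>+x. 2 * (indicator {y..e} x * ennreal ((x - x0) powr (-3/2))) \<partial>lborel)"
      using 1 by (intro nn_integral_cong) (auto simp: indicator_def ennreal_mult)
    also have "\<dots> = 2 * ennreal (2 * (y - x0) powr (-1/2) - 2 * (e - x0) powr (-1/2))"
      using nn_integral_powr_minus_three_halves[OF 1] by (simp add: nn_integral_cmult)
    also have "\<dots> \<le> 2 * ennreal (2 * (y - x0) powr (-1/2))"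
      by (intro mult_left_mono ennreal_leI) auto
    finally have "ennreal (v\<^sup>2 * (y - x0) powr (1/2))
        * (\<integral>\<^sup>+x. indicator {x0<..e} x * indicator {x0..x} y * ennreal (2 * (x - x0) powr (-3/2)) \<partial>lborel)
      \<le> ennreal (v\<^sup>2 * (y - x0) powr (1/2)) * (2 * ennreal (2 * (y - x0) powr (-1/2)))"
      by (rule mult_left_mono) simp
    also have "\<dots> = 2 * ennreal (2 * v\<^sup>2)"
      using 1 by (simp add: ennreal_mult''[symmetric] ennreal_mult'[symmetric] powr_add[symmetric] mult_ac)
    also have "\<dots> = ennreal (4 * v\<^sup>2)" by (simp add: ennreal_mult')
    finally show ?thesis using 1 by (simp add: ennreal_mult)
  next
    case 3
    then have "(\<lambda>x. indicator {x0<..e} x * indicator {x0..x} y * ennreal (2 * (x - x0) powr (-3/2))) = (\<lambda>x. 0)"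
      by (auto simp: indicator_def fun_eq_iff)
    then show ?thesis by simp
  qed simp
qed

lemma Hardy_inequality_right:
  fixes U V :: "real \<Rightarrow> real"
  assumes e: "x0 < e" and V: "V \<in> borel_measurable borel"
    and U: "\<And>x. x0 < x \<Longrightarrow> x \<le> e \<Longrightarrow> ennreal \<bar>U x\<bar> \<le> (\<integral>\<^sup>+y. indicator {x0..x} y * ennreal \<bar>V y\<bar> \<partial>lborel)"
  shows "(\<integral>\<^sup>+x. indicator {x0<..e} x * ennreal ((U x)\<^sup>2 / (x - x0)\<^sup>2) \<partial>lborel)
    \<le> 4 * (\<integral>\<^sup>+y. indicator {x0..e} y * ennreal ((V y)\<^sup>2) \<partial>lborel)"
proof -
  define k where "k x y = indicator {x0<..e} x * indicator {x0..x} y * ennreal (2 * (x - x0) powr (-3/2))" for x y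
  define w where "w y = ennreal ((V y)\<^sup>2 * (y - x0) powr (1/2))" for y
  have [measurable]: "V \<in> borel_measurable borel" by (rule V)
  have k_if: "k x y = (if x0 < x \<and> x \<le> e \<and> x0 \<le> y \<and> y \<le> x then ennreal (2 * (x - x0) powr (-3/2)) else 0)"
    for x y by (simp add: k_def indicator_def)
  have "(\<integral>\<^sup>+x. indicator {x0<..e} x * ennreal ((U x)\<^sup>2 / (x - x0)\<^sup>2) \<partial>lborel)
      \<le> (\<integral>\<^sup>+x. \<integral>\<^sup>+y. k x y * w y \<partial>lborel \<partial>lborel)"
  proof (rule nn_integral_mono)
    fix x
    show "indicator {x0<..e} x * ennreal ((U x)\<^sup>2 / (x - x0)\<^sup>2) \<le> (\<integral>\<^sup>+y. k x y * w y \<partial>lborel)"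
    proof (cases "x \<in> {x0<..e}")
      case True
      then have "ennreal \<bar>U x\<bar> \<le> (\<integral>\<^sup>+y. indicator {x0..x} y * ennreal \<bar>V y\<bar> \<partial>lborel)"
        using U by simp
      with True show ?thesis
        using Hardy_pointwise[OF _ V] by (simp add: k_def w_def mult_ac)
    qed simp
  qed
  also have "\<dots> = (\<integral>\<^sup>+y. \<integral>\<^sup>+x. k x y * w y \<partial>lborel \<partial>lborel)"
    by (rule lborel_pair.Fubini') (unfold k_if w_def, measurable)
  also have "\<dots> = (\<integral>\<^sup>+y. w y * \<integral>\<^sup>+x. k x y \<partial>lborel \<partial>lborel)"
  proof (rule nn_integral_cong)
    fix y
    have "(\<lambda>x. k x y) \<in> borel_measurable lborel" unfolding k_if by measurable
    from nn_integral_cmult[OF this, of "w y"]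
    show "(\<integral>\<^sup>+x. k x y * w y \<partial>lborel) = w y * (\<integral>\<^sup>+x. k x y \<partial>lborel)"
      by (simp only: mult.commute)
  qed
  also have "\<dots> \<le> (\<integral>\<^sup>+y. 4 * (indicator {x0..e} y * ennreal ((V y)\<^sup>2)) \<partial>lborel)"
    unfolding k_def w_def by (intro nn_integral_mono Hardy_kernel_le)
  also have "\<dots> = 4 * (\<integral>\<^sup>+y. indicator {x0..e} y * ennreal ((V y)\<^sup>2) \<partial>lborel)"
    by (rule nn_integral_cmult) simp
  finally show ?thesis .
qed

lemma Hardy_inequality_left:
  fixes U V :: "real \<Rightarrow> real"
  assumes s: "s < x0" and V: "V \<in> borel_measurable borel"
    and U_meas: "(\<lambda>x. indicator {s..<x0} x * ennreal ((U x)\<^sup>2 / (x - x0)\<^sup>2)) \<in> borel_measurable borel"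
    and U: "\<And>x. s \<le> x \<Longrightarrow> x < x0 \<Longrightarrow> ennreal \<bar>U x\<bar> \<le> (\<integral>\<^sup>+y. indicator {x..x0} y * ennreal \<bar>V y\<bar> \<partial>lborel)"
  shows "(\<integral>\<^sup>+x. indicator {s..<x0} x * ennreal ((U x)\<^sup>2 / (x - x0)\<^sup>2) \<partial>lborel)
    \<le> 4 * (\<integral>\<^sup>+y. indicator {s..x0} y * ennreal ((V y)\<^sup>2) \<partial>lborel)"
proof -
  have [measurable]: "V \<in> borel_measurable borel" by (rule V)
  have "(\<integral>\<^sup>+x. indicator {s..<x0} x * ennreal ((U x)\<^sup>2 / (x - x0)\<^sup>2) \<partial>lborel)
      = (\<integral>\<^sup>+x. indicator {- x0<..- s} x * ennreal ((U (- x))\<^sup>2 / (x - - x0)\<^sup>2) \<partial>lborel)"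
    using nn_integral_indicator_reflect[OF U_meas] by (simp add: power2_commute add.commute)
  also have "\<dots> \<le> 4 * (\<integral>\<^sup>+y. indicator {- x0..- s} y * ennreal ((V (- y))\<^sup>2) \<partial>lborel)"
  proof (rule Hardy_inequality_right)
    fix x assume "- x0 < x" "x \<le> - s"
    then have "ennreal \<bar>U (- x)\<bar> \<le> (\<integral>\<^sup>+y. indicator {- x..x0} y * ennreal \<bar>V y\<bar> \<partial>lborel)"
      using U[of "- x"] by simp
    also have "\<dots> = (\<integral>\<^sup>+y. indicator {- x0..x} y * ennreal \<bar>V (- y)\<bar> \<partial>lborel)"
      using nn_integral_indicator_reflect[of "{- x..x0}" "\<lambda>y. ennreal \<bar>V y\<bar>"] by simp
    finally show "ennreal \<bar>U (- x)\<bar> \<le> (\<integral>\<^sup>+y. indicator {- x0..x} y * ennreal \<bar>V (- y)\<bar> \<partial>lborel)" .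
  qed (use s in auto)
  also have "(\<integral>\<^sup>+y. indicator {- x0..- s} y * ennreal ((V (- y))\<^sup>2) \<partial>lborel)
      = (\<integral>\<^sup>+y. indicator {s..x0} y * ennreal ((V y)\<^sup>2) \<partial>lborel)"
    using nn_integral_indicator_reflect[of "{s..x0}" "\<lambda>y. ennreal ((V y)\<^sup>2)"] by simp
  finally show ?thesis .
qed

section \<open>Functions in \<open>W^{1,1}(0,1)\<close>\<close>

lemma W11_deriv_set_integrable:
  assumes "W11_deriv f g" "0 \<le> s" "t \<le> 1"
  shows "set_integrable lborel {s..t} g"
proof (rule set_integrable_subset[of _ "{0..1}"])
  show "set_integrable lborel {0..1} g" using assms(1) unfolding W11_deriv_def by blast
qed (use assms in auto)

lemma W11_deriv_integral_eq:
  assumes "W11_deriv f g" "0 \<le> s" "t \<le> 1"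
  shows "(LINT x:{s..t}|lborel. g x) = integral {s..t} g"
  by (rule set_borel_integral_eq_integral(2)[OF W11_deriv_set_integrable[OF assms]])

lemma W11_deriv_eq_integral:
  assumes W: "W11_deriv f g" and x: "x \<in> {0..1}"
  shows "f x = f 0 + integral {0..x} g"
proof -
  have "f x = f 0 + (LINT y:{0..x}|lborel. g y)"
    using W x unfolding W11_deriv_def by blast
  with W11_deriv_integral_eq[OF W, of 0 x] x show ?thesis by simp
qed

lemma W11_deriv_diff:
  assumes W: "W11_deriv f g" and st: "0 \<le> s" "s \<le> t" "t \<le> 1"
  shows "f t - f s = (LINT x:{s..t}|lborel. g x)"
proof -
  have "g integrable_on {0..t}"
    using set_borel_integral_eq_integral(1)[OF W11_deriv_set_integrable[OF W]] st by auto
  then have "integral {0..s} g + integral {s..t} g = integral {0..t} g"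
    by (rule Henstock_Kurzweil_Integration.integral_combine[OF st(1,2)])
  moreover have "f t = f 0 + integral {0..t} g" "f s = f 0 + integral {0..s} g"
    using W11_deriv_eq_integral[OF W, of t] W11_deriv_eq_integral[OF W, of s] st by auto
  ultimately show ?thesis using W11_deriv_integral_eq[OF W st(1,3)] by linarith
qed

lemma W11_deriv_continuous_on:
  assumes W: "W11_deriv f g"
  shows "continuous_on {0..1} f"
proof -
  have "g integrable_on {0..1}"
    using set_borel_integral_eq_integral(1)[OF W11_deriv_set_integrable[OF W, of 0 1]] by auto
  then have "continuous_on {0..1} (\<lambda>x. f 0 + integral {0..x} g)"
    by (intro continuous_intros indefinite_integral_continuous_1)
  then show ?thesis
    by (rule continuous_on_eq) (rule W11_deriv_eq_integral[OF W, symmetric])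
qed

lemma W11_deriv_abs_diff_le:
  assumes W: "W11_deriv f g" and M: "AE x in lborel. x \<in> {0..1} \<longrightarrow> \<bar>g x\<bar> \<le> M"
    and st: "0 \<le> s" "s \<le> t" "t \<le> 1"
  shows "\<bar>f t - f s\<bar> \<le> M * (t - s)"
proof -
  have gi: "set_integrable lborel {s..t} g" by (rule W11_deriv_set_integrable[OF W st(1,3)])
  have "\<bar>f t - f s\<bar> = norm (LINT x:{s..t}|lborel. g x)" using W11_deriv_diff[OF W st] by simp
  also have "\<dots> \<le> (LINT x:{s..t}|lborel. norm (g x))" by (rule set_integral_norm_bound[OF gi])
  also have "\<dots> \<le> (LINT x:{s..t}|lborel. M)"
  proof (rule set_integral_mono_AE)
    show "set_integrable lborel {s..t} (\<lambda>x. norm (g x))"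
      by (rule set_integrable_norm[OF gi])
    show "set_integrable lborel {s..t} (\<lambda>x. M)"
      unfolding set_integrable_def by (intro borel_integrable_compact) auto
    show "AE x\<in>{s..t} in lborel. norm (g x) \<le> M"
      using M by eventually_elim (use st in auto)
  qed
  also have "\<dots> = M * (t - s)" using st by (simp add: set_integral_const)
  finally show ?thesis .
qed

section \<open>Degenerate weights\<close>

text \<open>Gronwall's argument for the kernel \<open>K / (y - x0)\<close>: the right-hand side of the integral
  inequality, multiplied by \<open>(t - x0) powr (- K)\<close>, is nonincreasing in \<open>t\<close>.\<close>

lemma gronwall_powr:
  fixes F :: "real \<Rightarrow> real"
  assumes x0: "x0 < s" "s \<le> e" and K: "0 < K" and F: "continuous_on {s..e} F"
    and le: "\<And>t. t \<in> {s..e} \<Longrightarrow> F t \<le> F s + integral {s..t} (\<lambda>y. K / (y - x0) * F y)"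
  shows "F e \<le> F s * ((e - x0) / (s - x0)) powr K"
proof -
  define h where "h = (\<lambda>y. K / (y - x0) * F y)"
  define R where "R t = F s + integral {s..t} h" for t
  define Q where "Q t = R t * (t - x0) powr (- K)" for t
  define Q' where "Q' t = K * (t - x0) powr (- K - 1) * (F t - R t)" for t
  have hc: "continuous_on {s..e} h"
    unfolding h_def using x0 by (intro continuous_intros F) auto
  have "(Q has_real_derivative Q' t) (at t within {s..e})" if t: "t \<in> {s..e}" for t
  proof -
    have tp: "0 < t - x0" using t x0 by auto
    have "(R has_real_derivative h t) (at t within {s..e})"
      unfolding R_def by (rule derivative_eq_intros integral_has_real_derivative[OF hc t] | simp)+
    then have "(Q has_real_derivative h t * (t - x0) powr (- K) + R t * (- K * (t - x0) powr (- K - 1)))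
        (at t within {s..e})"
      unfolding Q_def using tp by (auto intro!: derivative_eq_intros)
    moreover have "h t * (t - x0) powr (- K) = K * (t - x0) powr (- K - 1) * F t"
      using tp by (simp add: h_def powr_diff field_simps)
    ultimately show ?thesis by (simp add: Q'_def algebra_simps)
  qed
  then obtain \<xi> where \<xi>: "\<xi> \<in> {s..e}" "Q e - Q s = Q' \<xi> * (e - s)"
    using mvt_very_simple[OF x0(2), of Q "\<lambda>t. (*) (Q' t)"]
    by (auto simp: has_field_derivative_def mult.commute)
  have "Q' \<xi> \<le> 0"
    unfolding Q'_def using le[OF \<xi>(1)] K by (intro mult_nonneg_nonpos) (auto simp: R_def h_def)
  then have "Q' \<xi> * (e - s) \<le> 0" using \<xi>(1) by (intro mult_nonpos_nonneg) auto
  then have "Q e \<le> Q s" using \<xi>(2) by linarith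
  have "(e - x0) powr (- K) * (e - x0) powr K = 1"
    using x0 by (simp add: powr_add[symmetric])
  then have "F e \<le> Q e * (e - x0) powr K"
    using le[of e] x0 by (simp add: Q_def R_def h_def mult.assoc)
  also have "\<dots> \<le> Q s * (e - x0) powr K"
    using \<open>Q e \<le> Q s\<close> by (intro mult_right_mono) auto
  also have "\<dots> = F s * ((e - x0) / (s - x0)) powr K"
    using x0 by (simp add: Q_def R_def powr_minus powr_divide field_simps)
  finally show ?thesis .
qed

lemma gronwall_powr_left:
  fixes F :: "real \<Rightarrow> real"
  assumes x0: "s < x0" "e \<le> s" and K: "0 < K" and F: "continuous_on {e..s} F"
    and le: "\<And>t. t \<in> {e..s} \<Longrightarrow> F t \<le> F s + integral {t..s} (\<lambda>y. K / (x0 - y) * F y)"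
  shows "F e \<le> F s * ((x0 - e) / (x0 - s)) powr K"
proof -
  have "F (- (- e)) \<le> F (- (- s)) * ((- e - - x0) / (- s - - x0)) powr K"
  proof (rule gronwall_powr[where F = "\<lambda>t. F (- t)"])
    show "continuous_on {- s..- e} (\<lambda>t. F (- t))"
      by (intro continuous_on_compose2[OF F] continuous_intros) auto
    fix t assume t: "t \<in> {- s..- e}"
    have "(\<lambda>y. K / (y - - x0) * F (- y)) = (\<lambda>y. (\<lambda>y. K / (x0 - y) * F y) (- y))"
      by (simp add: add.commute)
    then have "integral {- s..t} (\<lambda>y. K / (y - - x0) * F (- y)) = integral {- t..s} (\<lambda>y. K / (x0 - y) * F y)"
      using Henstock_Kurzweil_Integration.integral_reflect_real[of s "- t" "\<lambda>y. K / (x0 - y) * F y"]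
      by (simp only: minus_minus)
    then show "F (- t) \<le> F (- (- s)) + integral {- s..t} (\<lambda>y. K / (y - - x0) * F (- y))"
      using le[of "- t"] t by auto
  qed (use x0 K in auto)
  then show ?thesis by (simp add: add.commute)
qed

lemma degenerate_integral_ineq_right:
  fixes f g :: "real \<Rightarrow> real"
  assumes W: "W11_deriv f g" and ae: "AE x in lborel. x \<in> {0..1} \<longrightarrow> (x - x0) * g x \<le> K * f x"
    and st: "0 \<le> x0" "x0 < s" "s \<le> t" "t \<le> 1"
  shows "f t \<le> f s + integral {s..t} (\<lambda>y. K / (y - x0) * f y)"
proof -
  have "continuous_on {s..t} f"
    using W11_deriv_continuous_on[OF W] by (rule continuous_on_subset) (use st in auto)
  then have "continuous_on {s..t} (\<lambda>y. K / (y - x0) * f y)"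
    by (intro continuous_intros) (use st in auto)
  then have hi: "set_integrable lborel {s..t} (\<lambda>y. K / (y - x0) * f y)"
    unfolding set_integrable_def by (intro borel_integrable_compact) auto
  have "f t - f s = (LINT y:{s..t}|lborel. g y)" using W11_deriv_diff[OF W] st by auto
  also have "\<dots> \<le> (LINT y:{s..t}|lborel. K / (y - x0) * f y)"
  proof (rule set_integral_mono_AE[OF W11_deriv_set_integrable[OF W] hi])
    show "AE y\<in>{s..t} in lborel. g y \<le> K / (y - x0) * f y"
    proof (rule AE_mp[OF ae], intro AE_I2 impI)
      fix y assume "y \<in> {0..1} \<longrightarrow> (y - x0) * g y \<le> K * f y" "y \<in> {s..t}"
      with st show "g y \<le> K / (y - x0) * f y" by (simp add: pos_le_divide_eq mult.commute)
    qed
  qed (use st in auto)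
  also have "\<dots> = integral {s..t} (\<lambda>y. K / (y - x0) * f y)"
    by (rule set_borel_integral_eq_integral(2)[OF hi])
  finally show ?thesis by simp
qed

lemma degenerate_integral_ineq_left:
  fixes f g :: "real \<Rightarrow> real"
  assumes W: "W11_deriv f g" and ae: "AE x in lborel. x \<in> {0..1} \<longrightarrow> (x - x0) * g x \<le> K * f x"
    and st: "0 \<le> t" "t \<le> s" "s < x0" "x0 \<le> 1"
  shows "f t \<le> f s + integral {t..s} (\<lambda>y. K / (x0 - y) * f y)"
proof -
  have "continuous_on {t..s} f"
    using W11_deriv_continuous_on[OF W] by (rule continuous_on_subset) (use st in auto)
  then have "continuous_on {t..s} (\<lambda>y. - (K / (x0 - y) * f y))"
    by (intro continuous_intros) (use st in auto)
  then have hi: "set_integrable lborel {t..s} (\<lambda>y. - (K / (x0 - y) * f y))"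
    unfolding set_integrable_def by (intro borel_integrable_compact) auto
  have "- integral {t..s} (\<lambda>y. K / (x0 - y) * f y) = (LINT y:{t..s}|lborel. - (K / (x0 - y) * f y))"
    using set_borel_integral_eq_integral(2)[OF hi] by simp
  also have "\<dots> \<le> (LINT y:{t..s}|lborel. g y)"
  proof (rule set_integral_mono_AE[OF hi W11_deriv_set_integrable[OF W]])
    show "AE y\<in>{t..s} in lborel. - (K / (x0 - y) * f y) \<le> g y"
    proof (rule AE_mp[OF ae], intro AE_I2 impI)
      fix y assume "y \<in> {0..1} \<longrightarrow> (y - x0) * g y \<le> K * f y" "y \<in> {t..s}"
      with st have "- (K * f y) \<le> g y * (x0 - y)" "0 < x0 - y" by (auto simp: algebra_simps)
      then show "- (K / (x0 - y) * f y) \<le> g y"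
        by (subst times_divide_eq_left, subst minus_divide_left, subst pos_divide_le_eq) auto
    qed
  qed (use st in auto)
  also have "\<dots> = f s - f t" using W11_deriv_diff[OF W] st by auto
  finally show ?thesis by simp
qed

lemma degenerate_weight_lower_right:
  fixes f g :: "real \<Rightarrow> real"
  assumes W: "W11_deriv f g" and ae: "AE x in lborel. x \<in> {0..1} \<longrightarrow> (x - x0) * g x \<le> K * f x"
    and x: "0 \<le> x0" "x0 < x" "x \<le> 1" and K: "0 < K"
  shows "f 1 / (1 - x0) powr K * (x - x0) powr K \<le> f x"
proof -
  have "continuous_on {x..1} f"
    using W11_deriv_continuous_on[OF W] by (rule continuous_on_subset) (use x in auto)
  then have "f 1 \<le> f x * ((1 - x0) / (x - x0)) powr K"
    using degenerate_integral_ineq_right[OF W ae] x K by (intro gronwall_powr) auto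
  then show ?thesis using x by (simp add: powr_divide field_simps)
qed

lemma degenerate_weight_lower_left:
  fixes f g :: "real \<Rightarrow> real"
  assumes W: "W11_deriv f g" and ae: "AE x in lborel. x \<in> {0..1} \<longrightarrow> (x - x0) * g x \<le> K * f x"
    and x: "0 \<le> x" "x < x0" "x0 \<le> 1" and K: "0 < K"
  shows "f 0 / x0 powr K * (x0 - x) powr K \<le> f x"
proof -
  have "continuous_on {0..x} f"
    using W11_deriv_continuous_on[OF W] by (rule continuous_on_subset) (use x in auto)
  then have "f 0 \<le> f x * ((x0 - 0) / (x0 - x)) powr K"
    using degenerate_integral_ineq_left[OF W ae] x K by (intro gronwall_powr_left) auto
  then show ?thesis using x by (simp add: powr_divide field_simps)
qed

lemma degenerate_weight_lower_bound:
  assumes deg: "weak_deg x0 f K \<or> strong_deg x0 f K" and x0: "0 < x0" "x0 < 1"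
    and pos: "0 < f 0" "0 < f 1" "0 \<le> f x0"
  shows "\<exists>c>0. \<forall>x\<in>{0..1}. c * \<bar>x - x0\<bar> powr K \<le> f x"
proof -
  obtain g where W: "W11_deriv f g" and ae: "AE x in lborel. x \<in> {0..1} \<longrightarrow> (x - x0) * g x \<le> K * f x"
    and K: "0 < K"
    using deg unfolding weak_deg_def strong_deg_def W1inf_deriv_def by auto
  define c where "c = min (f 1 / (1 - x0) powr K) (f 0 / x0 powr K)"
  have "c * \<bar>x - x0\<bar> powr K \<le> f x" if x: "x \<in> {0..1}" for x
  proof (cases x0 x rule: linorder_cases)
    case less
    have "c * \<bar>x - x0\<bar> powr K \<le> f 1 / (1 - x0) powr K * (x - x0) powr K"
      using less mult_right_mono[of c "f 1 / (1 - x0) powr K" "(x - x0) powr K"] by (simp add: c_def)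
    also have "\<dots> \<le> f x" by (rule degenerate_weight_lower_right[OF W ae]) (use x x0 less K in auto)
    finally show ?thesis .
  next
    case greater
    have "c * \<bar>x - x0\<bar> powr K \<le> f 0 / x0 powr K * (x0 - x) powr K"
      using greater mult_right_mono[of c "f 0 / x0 powr K" "(x0 - x) powr K"] by (simp add: c_def)
    also have "\<dots> \<le> f x" by (rule degenerate_weight_lower_left[OF W ae]) (use x x0 greater K in auto)
    finally show ?thesis .
  qed (use pos in simp)
  moreover have "0 < c" using pos x0 by (simp add: c_def)
  ultimately show ?thesis by blast
qed

lemma strong_deg_le_mult_abs:
  assumes S: "strong_deg x0 f K" and fx0: "f x0 = 0" and x0: "0 \<le> x0" "x0 \<le> 1"
  shows "\<exists>M. \<forall>x\<in>{0..1}. f x \<le> M * \<bar>x - x0\<bar>"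
proof -
  obtain g M where W: "W11_deriv f g" and M: "AE x in lborel. x \<in> {0..1} \<longrightarrow> \<bar>g x\<bar> \<le> M"
    using S unfolding strong_deg_def W1inf_deriv_def by blast
  have "f x \<le> M * \<bar>x - x0\<bar>" if "x \<in> {0..1}" for x
    using W11_deriv_abs_diff_le[OF W M, of x0 x] W11_deriv_abs_diff_le[OF W M, of x x0] that x0 fx0
    by (cases "x0 \<le> x") auto
  then show ?thesis by blast
qed

lemma degenerate_bounded_above:
  assumes "weak_deg x0 f K \<or> strong_deg x0 f K"
  shows "\<exists>M. \<forall>x\<in>{0..1}. f x \<le> M"
proof -
  obtain g where "W11_deriv f g"
    using assms unfolding weak_deg_def strong_deg_def W1inf_deriv_def by auto
  then have "continuous_on {0..1} f" by (rule W11_deriv_continuous_on)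
  then show ?thesis using continuous_attains_sup[of "{0..1::real}" f] by auto
qed

lemma basic_ab_nonneg:
  assumes "basic_ab x0 a b" "x \<in> {0..1}"
  shows "0 \<le> a x" "0 \<le> b x"
proof -
  have "x = x0 \<or> (0 < a x \<and> 0 < b x)" using assms unfolding basic_ab_def by auto
  then show "0 \<le> a x" "0 \<le> b x" using assms(1) unfolding basic_ab_def by auto
qed

lemma growth_weights_mult_le:
  assumes x0: "0 \<le> x0" "x0 \<le> 1" and ab: "basic_ab x0 a b"
    and growth: "growth x0 a b K1 K2" and K: "1 \<le> K1 + K2"
  shows "\<exists>C. \<forall>x\<in>{0..1}. a x * b x \<le> C * \<bar>x - x0\<bar>"
proof -
  obtain c1 c2 where c: "0 < c1" "0 < c2"
    and le: "\<And>x. x \<in> {0..1} \<Longrightarrow> c1 * a x \<le> \<bar>x - x0\<bar> powr K1 \<and> c2 * b x \<le> \<bar>x - x0\<bar> powr K2"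
    using growth unfolding growth_def by blast
  have "a x * b x \<le> 1 / (c1 * c2) * \<bar>x - x0\<bar>" if x: "x \<in> {0..1}" for x
  proof -
    have "c1 * c2 * (a x * b x) = (c1 * a x) * (c2 * b x)" by (simp add: mult_ac)
    also have "\<dots> \<le> \<bar>x - x0\<bar> powr K1 * \<bar>x - x0\<bar> powr K2"
      using le[OF x] c basic_ab_nonneg[OF ab x] by (intro mult_mono) auto
    also have "\<dots> \<le> \<bar>x - x0\<bar> powr 1"
      unfolding powr_add[symmetric] using K x x0 by (intro powr_mono') auto
    finally show ?thesis using c by (simp add: field_simps)
  qed
  then show ?thesis by blast
qed

lemma strong_deg_weights_mult_le:
  assumes x0: "0 \<le> x0" "x0 \<le> 1" and ab: "basic_ab x0 a b"
    and deg: "strong_deg x0 a K1" "strong_deg x0 b K2"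
  shows "\<exists>C. \<forall>x\<in>{0..1}. a x * b x \<le> C * \<bar>x - x0\<bar>"
proof -
  obtain Ma Mb where Ma: "\<forall>x\<in>{0..1}. a x \<le> Ma * \<bar>x - x0\<bar>" and Mb: "\<forall>x\<in>{0..1}. b x \<le> Mb * \<bar>x - x0\<bar>"
    using strong_deg_le_mult_abs[OF deg(1)] strong_deg_le_mult_abs[OF deg(2)] ab x0
    unfolding basic_ab_def by metis
  have "a x * b x \<le> \<bar>Ma * Mb\<bar> * \<bar>x - x0\<bar>" if x: "x \<in> {0..1}" for x
  proof -
    have d: "\<bar>x - x0\<bar> \<le> 1" using x x0 by auto
    have "a x * b x \<le> (Ma * \<bar>x - x0\<bar>) * (Mb * \<bar>x - x0\<bar>)"
      using Ma Mb basic_ab_nonneg[OF ab x] x by (intro mult_mono) (auto intro: order_trans)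
    also have "\<dots> = (Ma * Mb) * (\<bar>x - x0\<bar> * \<bar>x - x0\<bar>)" by (simp add: mult_ac)
    also have "\<dots> \<le> \<bar>Ma * Mb\<bar> * (\<bar>x - x0\<bar> * \<bar>x - x0\<bar>)" by (intro mult_right_mono) auto
    also have "\<dots> \<le> \<bar>Ma * Mb\<bar> * \<bar>x - x0\<bar>" by (rule mult_left_mono[OF mult_left_le[OF d abs_ge_zero]]) simp
    finally show ?thesis .
  qed
  then show ?thesis by blast
qed

lemma condH_weights_mult_le:
  assumes x0: "0 < x0" "x0 < 1" and ab: "basic_ab x0 a b"
    and H: "condH x0 a b K1 K2" "\<not> H1 x0 a b K1 K2"
  shows "\<exists>C. \<forall>x\<in>{0..1}. a x * b x \<le> C * \<bar>x - x0\<bar>"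
proof -
  have "1 \<le> K1 + K2" if "H3 x0 a b K1 K2"
    using that unfolding H3_def weak_deg_def strong_deg_def by auto
  then consider "growth x0 a b K1 K2" "1 \<le> K1 + K2" | "strong_deg x0 a K1" "strong_deg x0 b K2"
    using H unfolding condH_def H2_def H4_def by (auto simp: H3_def)
  then show ?thesis
    using growth_weights_mult_le[OF _ _ ab] strong_deg_weights_mult_le[OF _ _ ab] x0 by cases auto
qed

lemma condH_weights_lower_bound:
  assumes x0: "0 < x0" "x0 < 1" and ab: "basic_ab x0 a b" and H: "condH x0 a b K1 K2"
  shows "0 < K1" "0 < K2"
    and "\<exists>c>0. \<forall>x\<in>{0..1}. c * \<bar>x - x0\<bar> powr K1 \<le> a x"
    and "\<exists>c>0. \<forall>x\<in>{0..1}. c * \<bar>x - x0\<bar> powr K2 \<le> b x"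
proof -
  have da: "weak_deg x0 a K1 \<or> strong_deg x0 a K1" and db: "weak_deg x0 b K2 \<or> strong_deg x0 b K2"
    using H unfolding condH_def H1_def H2_def H3_def H4_def by auto
  then show "0 < K1" "0 < K2" unfolding weak_deg_def strong_deg_def by auto
  have "0 < a 0" "0 < a 1" "0 \<le> a x0" "0 < b 0" "0 < b 1" "0 \<le> b x0"
    using ab x0 unfolding basic_ab_def by auto
  then show "\<exists>c>0. \<forall>x\<in>{0..1}. c * \<bar>x - x0\<bar> powr K1 \<le> a x"
    and "\<exists>c>0. \<forall>x\<in>{0..1}. c * \<bar>x - x0\<bar> powr K2 \<le> b x"
    using degenerate_weight_lower_bound[OF da x0] degenerate_weight_lower_bound[OF db x0] by auto
qed

lemma weights_mult_ge_sq:
  fixes a b :: "real \<Rightarrow> real"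
  assumes x: "x \<in> {0..1}" and x0: "0 \<le> x0" "x0 \<le> 1" and K: "K1 + K2 \<le> 2"
    and a: "0 < ca" "ca * \<bar>x - x0\<bar> powr K1 \<le> a x"
    and b: "0 < cb" "cb * \<bar>x - x0\<bar> powr K2 \<le> b x"
  shows "ca * cb * (x - x0)\<^sup>2 \<le> a x * b x"
proof -
  have "(x - x0)\<^sup>2 = \<bar>x - x0\<bar> powr 2" by simp
  also have "\<dots> \<le> \<bar>x - x0\<bar> powr (K1 + K2)" using K x x0 by (intro powr_mono') auto
  finally have "ca * cb * (x - x0)\<^sup>2 \<le> (ca * \<bar>x - x0\<bar> powr K1) * (cb * \<bar>x - x0\<bar> powr K2)"
    using a(1) b(1) by (simp add: powr_add mult_ac)
  also have "\<dots> \<le> a x * b x"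
    using a b by (intro mult_mono) (auto intro: order_trans[OF _ a(2)])
  finally show ?thesis .
qed

section \<open>The space \<open>H^1_0(0,1)\<close>\<close>

lemma I01_nonneg:
  assumes "\<And>x. x \<in> {0..1} \<Longrightarrow> 0 \<le> f x"
  shows "0 \<le> I01 f"
  unfolding I01_def set_lebesgue_integral_def
  by (rule Bochner_Integration.integral_nonneg) (use assms in \<open>auto simp: indicator_def\<close>)

lemma I01_le_of_nn_integral_le:
  assumes "\<And>x. x \<in> {0..1} \<Longrightarrow> 0 \<le> f x" "0 \<le> c"
    and "(\<integral>\<^sup>+x. indicator {0..1} x * ennreal (f x) \<partial>lborel) \<le> ennreal c"
  shows "I01 f \<le> c"
  unfolding I01_def by (rule set_integral_le_of_nn_integral_le[OF assms])

lemma I01_le_mult_I01: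
  assumes g: "set_integrable lborel {0..1} g"
    and f: "\<And>x. x \<in> {0..1} \<Longrightarrow> 0 \<le> f x" "\<And>x. x \<in> {0..1} \<Longrightarrow> f x \<le> M * g x"
  shows "I01 f \<le> M * I01 g"
proof (rule I01_le_of_nn_integral_le[OF f(1)])
  have Mg: "set_integrable lborel {0..1} (\<lambda>x. M * g x)" "\<And>x. x \<in> {0..1} \<Longrightarrow> 0 \<le> M * g x"
    using g f by (auto intro: order_trans)
  have "(\<integral>\<^sup>+x. indicator {0..1} x * ennreal (f x) \<partial>lborel) \<le> (\<integral>\<^sup>+x. indicator {0..1} x * ennreal (M * g x) \<partial>lborel)"
    using f by (intro nn_integral_mono) (auto simp: indicator_def ennreal_leI)
  also have "\<dots> = ennreal (M * I01 g)"
    using nn_integral_eq_set_integral_nonneg[OF Mg] unfolding I01_def by (simp add: set_integral_mult_right)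
  finally show "(\<integral>\<^sup>+x. indicator {0..1} x * ennreal (f x) \<partial>lborel) \<le> ennreal (M * I01 g)" .
  show "0 \<le> M * I01 g"
    using I01_nonneg[OF Mg(2)] by (simp add: I01_def)
qed

lemma H10_deriv_measurable:
  assumes "H10 u u'"
  shows "(\<lambda>y. indicator {0..1} y * u' y) \<in> borel_measurable borel"
  using assms unfolding H10_def set_borel_measurable_def by simp

lemma H10_set_integrable_deriv:
  assumes "H10 u u'"
  shows "set_integrable lborel {0..1} u'"
proof -
  have i2: "integrable lborel (\<lambda>x. indicator {0..1} x *\<^sub>R ((u' x)\<^sup>2 + 1))"
    using assms unfolding H10_def set_integrable_def
    by (auto simp: distrib_left intro!: borel_integrable_compact)
  have "\<bar>u' x\<bar> \<le> (u' x)\<^sup>2 + 1" for x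
  proof -
    have "0 \<le> (\<bar>u' x\<bar> - 1/2)\<^sup>2" by simp
    then show ?thesis by (simp add: power2_eq_square algebra_simps abs_mult_self_eq)
  qed
  then show ?thesis unfolding set_integrable_def
    by (intro Bochner_Integration.integrable_bound[OF i2]) (use H10_deriv_measurable[OF assms] in \<open>auto simp: indicator_def\<close>)
qed

lemma H10_imp_W11_deriv:
  assumes "H10 u u'"
  shows "W11_deriv u u'"
  using assms H10_set_integrable_deriv[OF assms] unfolding H10_def W11_deriv_def by auto

lemma H10_abs_diff_le:
  assumes H: "H10 u u'" and st: "0 \<le> s" "s \<le> t" "t \<le> 1"
  shows "ennreal \<bar>u t - u s\<bar> \<le> (\<integral>\<^sup>+y. indicator {s..t} y * ennreal \<bar>u' y\<bar> \<partial>lborel)"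
proof -
  have W: "W11_deriv u u'" by (rule H10_imp_W11_deriv[OF H])
  have "ennreal \<bar>u t - u s\<bar> = ennreal (norm (LINT y:{s..t}|lborel. u' y))"
    using W11_deriv_diff[OF W st] by simp
  also have "\<dots> \<le> (\<integral>\<^sup>+y. norm (indicator {s..t} y *\<^sub>R u' y) \<partial>lborel)"
    unfolding set_lebesgue_integral_def
    by (rule integral_norm_bound_ennreal) (use W11_deriv_set_integrable[OF W st(1,3)] in \<open>simp add: set_integrable_def\<close>)
  also have "\<dots> = (\<integral>\<^sup>+y. indicator {s..t} y * ennreal \<bar>u' y\<bar> \<partial>lborel)"
    by (intro nn_integral_cong) (auto simp: indicator_def)
  finally show ?thesis .
qed

lemma H10_nn_integral_deriv_sq:
  assumes H: "H10 u u'"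
  shows "(\<integral>\<^sup>+y. indicator {0..1} y * ennreal ((u' y)\<^sup>2) \<partial>lborel) = ennreal (I01 (\<lambda>x. (u' x)\<^sup>2))"
  unfolding I01_def by (rule nn_integral_eq_set_integral_nonneg) (use H in \<open>auto simp: H10_def\<close>)

lemma H10_sq_le:
  assumes H: "H10 u u'" and x: "x \<in> {0..1}"
  shows "(u x)\<^sup>2 \<le> I01 (\<lambda>x. (u' x)\<^sup>2)"
proof -
  define V where "V y = indicator {0..1} y * u' y" for y
  have V: "(\<integral>\<^sup>+y. indicator {0..x} y * ennreal \<bar>u' y\<bar> \<partial>lborel) = (\<integral>\<^sup>+y. indicator {0..x} y * ennreal \<bar>V y\<bar> \<partial>lborel)"
    using x by (intro nn_integral_cong) (auto simp: V_def indicator_def)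
  have "ennreal ((u x)\<^sup>2) = (ennreal \<bar>u x - u 0\<bar>)\<^sup>2"
    using H by (simp add: H10_def ennreal_power)
  also have "\<dots> \<le> (\<integral>\<^sup>+y. indicator {0..x} y * ennreal \<bar>V y\<bar> \<partial>lborel)\<^sup>2"
    using H10_abs_diff_le[OF H, of 0 x] x unfolding V by (intro power_mono_ennreal) auto
  also have "\<dots> \<le> (\<integral>\<^sup>+y. indicator {0..x} y * ennreal ((V y)\<^sup>2 * 1) \<partial>lborel) * (\<integral>\<^sup>+y. indicator {0..x} y * ennreal (1 / 1) \<partial>lborel)"
    using H10_deriv_measurable[OF H] by (intro Cauchy_Schwarz_nn_integral_weighted) (auto simp: V_def)
  also have "\<dots> = (\<integral>\<^sup>+y. indicator {0..x} y * ennreal ((V y)\<^sup>2) \<partial>lborel) * ennreal x"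
    using x by (simp add: nn_integral_indicator)
  also have "\<dots> \<le> (\<integral>\<^sup>+y. indicator {0..1} y * ennreal ((u' y)\<^sup>2) \<partial>lborel) * 1"
    using x by (intro mult_mono nn_integral_mono) (auto simp: V_def indicator_def)
  finally have "ennreal ((u x)\<^sup>2) \<le> ennreal (I01 (\<lambda>x. (u' x)\<^sup>2))"
    by (simp add: H10_nn_integral_deriv_sq[OF H])
  then show ?thesis using I01_nonneg[of "\<lambda>x. (u' x)\<^sup>2"] by (simp add: ennreal_le_iff)
qed

lemma H10_sq_div_measurable:
  assumes H: "H10 u u'" and S: "S \<in> sets borel" "S \<subseteq> {0..1}"
  shows "(\<lambda>x. indicator S x * ennreal ((u x)\<^sup>2 / (x - x0)\<^sup>2)) \<in> borel_measurable borel"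
proof -
  have "continuous_on S u"
    using W11_deriv_continuous_on[OF H10_imp_W11_deriv[OF H]] S(2) by (rule continuous_on_subset)
  then have [measurable]: "(\<lambda>x. indicator S x * u x) \<in> borel_measurable borel"
    using borel_measurable_continuous_on_indicator[OF S(1), of u] by simp
  have eq: "(\<lambda>x. indicator S x * ennreal ((u x)\<^sup>2 / (x - x0)\<^sup>2))
      = (\<lambda>x. ennreal ((indicator S x * u x)\<^sup>2 / (x - x0)\<^sup>2))"
    by (auto simp: indicator_def fun_eq_iff)
  show ?thesis unfolding eq by measurable
qed

lemma H10_Hardy_inequality:
  assumes H: "H10 u u'" and x0: "0 < x0" "x0 < 1" and u0: "u x0 = 0"
  shows "(\<integral>\<^sup>+x. indicator {0..1} x * ennreal ((u x)\<^sup>2 / (x - x0)\<^sup>2) \<partial>lborel) \<le> 8 * ennreal (I01 (\<lambda>x. (u' x)\<^sup>2))"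
proof -
  define V where "V y = indicator {0..1} y * u' y" for y
  define F where "F x = ennreal ((u x)\<^sup>2 / (x - x0)\<^sup>2)" for x
  have V_meas: "V \<in> borel_measurable borel" unfolding V_def by (rule H10_deriv_measurable[OF H])
  have abs_V: "(\<integral>\<^sup>+y. indicator {s..t} y * ennreal \<bar>u' y\<bar> \<partial>lborel) = (\<integral>\<^sup>+y. indicator {s..t} y * ennreal \<bar>V y\<bar> \<partial>lborel)"
    if "0 \<le> s" "t \<le> 1" for s t
    by (intro nn_integral_cong) (use that in \<open>auto simp: V_def indicator_def\<close>)
  have V_sq: "4 * (\<integral>\<^sup>+y. indicator {s..t} y * ennreal ((V y)\<^sup>2) \<partial>lborel) \<le> 4 * ennreal (I01 (\<lambda>x. (u' x)\<^sup>2))"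
    if "0 \<le> s" "t \<le> 1" for s t
    unfolding H10_nn_integral_deriv_sq[OF H, symmetric]
    by (intro mult_left_mono nn_integral_mono) (use that in \<open>auto simp: V_def indicator_def\<close>)
  have right: "(\<integral>\<^sup>+x. indicator {x0<..1} x * F x \<partial>lborel) \<le> 4 * ennreal (I01 (\<lambda>x. (u' x)\<^sup>2))"
    unfolding F_def
  proof (rule order_trans[OF Hardy_inequality_right[OF x0(2) V_meas] V_sq])
    fix x assume "x0 < x" "x \<le> 1"
    then show "ennreal \<bar>u x\<bar> \<le> (\<integral>\<^sup>+y. indicator {x0..x} y * ennreal \<bar>V y\<bar> \<partial>lborel)"
      using H10_abs_diff_le[OF H, of x0 x] x0 u0 abs_V[of x0 x] by simp
  qed (use x0 in auto)
  have left: "(\<integral>\<^sup>+x. indicator {0..<x0} x * F x \<partial>lborel) \<le> 4 * ennreal (I01 (\<lambda>x. (u' x)\<^sup>2))"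
    unfolding F_def
  proof (rule order_trans[OF Hardy_inequality_left[OF x0(1) V_meas] V_sq])
    show "(\<lambda>x. indicator {0..<x0} x * ennreal ((u x)\<^sup>2 / (x - x0)\<^sup>2)) \<in> borel_measurable borel"
      using x0 by (intro H10_sq_div_measurable[OF H]) auto
    fix x assume "0 \<le> x" "x < x0"
    then show "ennreal \<bar>u x\<bar> \<le> (\<integral>\<^sup>+y. indicator {x..x0} y * ennreal \<bar>V y\<bar> \<partial>lborel)"
      using H10_abs_diff_le[OF H, of x x0] x0 u0 abs_V[of x x0] by simp
  qed (use x0 in auto)
  have "(\<integral>\<^sup>+x. indicator {0..1} x * F x \<partial>lborel)
      \<le> (\<integral>\<^sup>+x. indicator {0..<x0} x * F x + indicator {x0<..1} x * F x \<partial>lborel)"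
    by (intro nn_integral_mono) (auto simp: indicator_def F_def u0)
  also have "\<dots> = (\<integral>\<^sup>+x. indicator {0..<x0} x * F x \<partial>lborel) + (\<integral>\<^sup>+x. indicator {x0<..1} x * F x \<partial>lborel)"
    unfolding F_def by (rule nn_integral_add) (use x0 in \<open>auto intro!: H10_sq_div_measurable[OF H]\<close>)
  also have "\<dots> \<le> 4 * ennreal (I01 (\<lambda>x. (u' x)\<^sup>2)) + 4 * ennreal (I01 (\<lambda>x. (u' x)\<^sup>2))"
    by (rule add_mono[OF left right])
  finally show ?thesis by (simp add: F_def flip: distrib_right)
qed

text \<open>If \<open>u x0 \<noteq> 0\<close> then \<open>(u x)\<^sup>2 \<ge> m > 0\<close> near \<open>x0\<close>, so \<open>(u x)\<^sup>2 / W x \<ge> m / (C * (x - x0))\<close>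
  there, which is not integrable.\<close>

lemma vanishes_if_set_integrable_sq_div_weight:
  fixes u W :: "real \<Rightarrow> real"
  assumes u: "continuous_on {0..1} u" and x0: "0 \<le> x0" "x0 < 1"
    and W: "\<And>x. x \<in> {0..1} \<Longrightarrow> x \<noteq> x0 \<Longrightarrow> 0 < W x \<and> W x \<le> C * \<bar>x - x0\<bar>"
    and int: "set_integrable lborel {0..1} (\<lambda>x. (u x)\<^sup>2 / W x)"
  shows "u x0 = 0"
proof (rule ccontr)
  assume "u x0 \<noteq> 0"
  define m where "m = (u x0)\<^sup>2 / 2"
  have m: "0 < m" using \<open>u x0 \<noteq> 0\<close> by (simp add: m_def)
  have "0 < C * (1 - x0)" using W[of "(x0 + 1) / 2"] x0 by auto
  with x0 have "0 < C" by (simp add: zero_less_mult_iff)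
  have "continuous_on {0..1} (\<lambda>x. (u x)\<^sup>2)" by (intro continuous_intros u)
  then obtain d where d: "0 < d" "\<And>x. x \<in> {0..1} \<Longrightarrow> dist x x0 < d \<Longrightarrow> dist ((u x)\<^sup>2) ((u x0)\<^sup>2) < m"
    using m x0 unfolding continuous_on_iff by (metis atLeastAtMost_iff less_eq_real_def)
  define \<delta> where "\<delta> = min (d / 2) (1 - x0)"
  have \<delta>: "0 < \<delta>" "\<delta> \<le> 1 - x0" "\<delta> < d" using d x0 by (auto simp: \<delta>_def)
  have "top = ennreal (m / C) * (\<integral>\<^sup>+x. indicator {x0<..x0 + \<delta>} x * ennreal (1 / (x - x0)) \<partial>lborel)"
    using m \<open>0 < C\<close> by (simp add: nn_integral_inverse_shift_eq_top[OF \<delta>(1)] ennreal_mult_top)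
  also have "\<dots> = (\<integral>\<^sup>+x. ennreal (m / C) * (indicator {x0<..x0 + \<delta>} x * ennreal (1 / (x - x0))) \<partial>lborel)"
    by (rule nn_integral_cmult[symmetric]) measurable
  also have "\<dots> \<le> (\<integral>\<^sup>+x. indicator ({0..1} - {x0}) x * ennreal ((u x)\<^sup>2 / W x) \<partial>lborel)"
  proof (rule nn_integral_mono)
    fix x
    show "ennreal (m / C) * (indicator {x0<..x0 + \<delta>} x * ennreal (1 / (x - x0)))
        \<le> indicator ({0..1} - {x0}) x * ennreal ((u x)\<^sup>2 / W x)"
    proof (cases "x \<in> {x0<..x0 + \<delta>}")
      case True
      then have x: "x \<in> {0..1}" "x \<noteq> x0" "dist x x0 < d" using \<delta> x0 by (auto simp: dist_real_def)
      then have "m \<le> (u x)\<^sup>2" using d(2)[OF x(1,3)] unfolding m_def dist_real_def by linarith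
      then have "m / C * (1 / (x - x0)) \<le> (u x)\<^sup>2 / W x"
        using W[OF x(1,2)] True m \<open>0 < C\<close> by (simp add: frac_le)
      then show ?thesis using True x m \<open>0 < C\<close> by (simp add: ennreal_mult[symmetric] ennreal_leI)
    qed simp
  qed
  also have "\<dots> = ennreal (LINT x:{0..1} - {x0}|lborel. (u x)\<^sup>2 / W x)"
    by (rule nn_integral_eq_set_integral_nonneg[OF set_integrable_subset[OF int]])
      (use W in \<open>auto simp: less_imp_le\<close>)
  finally show False by (simp add: top_unique)
qed

section \<open>Hardy--Poincare inequalities\<close>

lemma I01_sq_div_weight_le:
  fixes u W :: "real \<Rightarrow> real"
  assumes x0: "0 < x0" "x0 < 1" and \<gamma>: "0 \<le> \<gamma>" "\<gamma> < 1" and c: "0 < c"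
    and W: "\<And>x. x \<in> {0..1} \<Longrightarrow> c * \<bar>x - x0\<bar> powr \<gamma> \<le> W x"
    and u: "\<And>x. x \<in> {0..1} \<Longrightarrow> (u x)\<^sup>2 \<le> B"
  shows "I01 (\<lambda>x. (u x)\<^sup>2 / W x) \<le> B / c * (x0 powr (1 - \<gamma>) / (1 - \<gamma>) + (1 - x0) powr (1 - \<gamma>) / (1 - \<gamma>))"
proof (rule I01_le_of_nn_integral_le)
  define J where "J = x0 powr (1 - \<gamma>) / (1 - \<gamma>) + (1 - x0) powr (1 - \<gamma>) / (1 - \<gamma>)"
  have B: "0 \<le> B" using order_trans[OF zero_le_power2 u[of 0]] by simp
  show "0 \<le> B / c * J" using B c \<gamma> by (simp add: J_def)
  show "0 \<le> (u x)\<^sup>2 / W x" if "x \<in> {0..1}" for x using order_trans[OF _ W[OF that], of 0] c by simp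
  have "(\<integral>\<^sup>+x. indicator {0..1} x * ennreal ((u x)\<^sup>2 / W x) \<partial>lborel)
      \<le> (\<integral>\<^sup>+x. ennreal (B / c) * (indicator {0..1} x * ennreal (\<bar>x - x0\<bar> powr (-\<gamma>))) \<partial>lborel)"
  proof (rule nn_integral_mono_AE)
    show "AE x in lborel. indicator {0..1} x * ennreal ((u x)\<^sup>2 / W x)
        \<le> ennreal (B / c) * (indicator {0..1} x * ennreal (\<bar>x - x0\<bar> powr (-\<gamma>)))"
      using AE_lborel_singleton[of x0]
    proof eventually_elim
      case (elim x)
      show ?case
      proof (cases "x \<in> {0..1}")
        case True
        have p: "0 < \<bar>x - x0\<bar> powr \<gamma>" using elim by simp
        have "(u x)\<^sup>2 / W x \<le> B / (c * \<bar>x - x0\<bar> powr \<gamma>)"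
          using u[OF True] W[OF True] B c p by (intro frac_le) auto
        also have "\<dots> = B / c * \<bar>x - x0\<bar> powr (-\<gamma>)" by (simp add: powr_minus_divide)
        finally show ?thesis using True B c by (simp add: ennreal_mult[symmetric] ennreal_leI)
      qed simp
    qed
  qed
  also have "\<dots> = ennreal (B / c) * (\<integral>\<^sup>+x. indicator {0..1} x * ennreal (\<bar>x - x0\<bar> powr (-\<gamma>)) \<partial>lborel)"
    by (rule nn_integral_cmult) measurable
  also have "\<dots> \<le> ennreal (B / c) * ennreal J"
    unfolding J_def by (intro mult_left_mono nn_integral_abs_powr_le x0 \<gamma>) simp
  also have "\<dots> = ennreal (B / c * J)"
    using B c \<gamma> by (intro ennreal_mult[symmetric]) (auto simp: J_def)
  finally show "(\<integral>\<^sup>+x. indicator {0..1} x * ennreal ((u x)\<^sup>2 / W x) \<partial>lborel) \<le> ennreal (B / c * J)" .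
qed

lemma I01_sq_div_le_Hardy:
  assumes H: "H10 u u'" and x0: "0 < x0" "x0 < 1" and u0: "u x0 = 0" and c: "0 < c"
    and W: "\<And>x. x \<in> {0..1} \<Longrightarrow> c * (x - x0)\<^sup>2 \<le> W x"
  shows "I01 (\<lambda>x. (u x)\<^sup>2 / W x) \<le> 8 / c * I01 (\<lambda>x. (u' x)\<^sup>2)"
proof (rule I01_le_of_nn_integral_le)
  show "0 \<le> (u x)\<^sup>2 / W x" if "x \<in> {0..1}" for x using order_trans[OF _ W[OF that], of 0] c by simp
  show "0 \<le> 8 / c * I01 (\<lambda>x. (u' x)\<^sup>2)" using c by (simp add: I01_nonneg)
  have "(\<integral>\<^sup>+x. indicator {0..1} x * ennreal ((u x)\<^sup>2 / W x) \<partial>lborel)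
      \<le> (\<integral>\<^sup>+x. ennreal (1 / c) * (indicator {0..1} x * ennreal ((u x)\<^sup>2 / (x - x0)\<^sup>2)) \<partial>lborel)"
  proof (rule nn_integral_mono)
    fix x
    show "indicator {0..1} x * ennreal ((u x)\<^sup>2 / W x)
        \<le> ennreal (1 / c) * (indicator {0..1} x * ennreal ((u x)\<^sup>2 / (x - x0)\<^sup>2))"
    proof (cases "x \<in> {0..1} \<and> x \<noteq> x0")
      case True
      have "0 < c * (x - x0)\<^sup>2" using True c by simp
      then have "(u x)\<^sup>2 / W x \<le> (u x)\<^sup>2 / (c * (x - x0)\<^sup>2)"
        using W[of x] True by (intro divide_left_mono) auto
      then show ?thesis using True c by (simp add: ennreal_mult[symmetric] ennreal_leI)
    qed (auto simp: u0)
  qed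
  also have "\<dots> = ennreal (1 / c) * (\<integral>\<^sup>+x. indicator {0..1} x * ennreal ((u x)\<^sup>2 / (x - x0)\<^sup>2) \<partial>lborel)"
    by (rule nn_integral_cmult) (use H10_sq_div_measurable[OF H] in simp)
  also have "\<dots> \<le> ennreal (1 / c) * (8 * ennreal (I01 (\<lambda>x. (u' x)\<^sup>2)))"
    by (rule mult_left_mono[OF H10_Hardy_inequality[OF H x0 u0]]) simp
  also have "\<dots> = ennreal (1 / c) * ennreal (8 * I01 (\<lambda>x. (u' x)\<^sup>2))"
    by (simp add: ennreal_mult')
  also have "\<dots> = ennreal (8 / c * I01 (\<lambda>x. (u' x)\<^sup>2))"
    using c by (subst ennreal_mult[symmetric]) (auto simp: I01_nonneg)
  finally show "(\<integral>\<^sup>+x. indicator {0..1} x * ennreal ((u x)\<^sup>2 / W x) \<partial>lborel) \<le> ennreal (8 / c * I01 (\<lambda>x. (u' x)\<^sup>2))" .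
qed

lemma I01_sq_div_le_mult_I01_sq_div_mult:
  assumes int: "set_integrable lborel {0..1} (\<lambda>x. (u x)\<^sup>2 / (a x * b x))" and u0: "u x0 = 0"
    and ab: "\<And>x. x \<in> {0..1} \<Longrightarrow> x \<noteq> x0 \<Longrightarrow> 0 < a x \<and> 0 < b x \<and> b x \<le> M"
  shows "I01 (\<lambda>x. (u x)\<^sup>2 / a x) \<le> M * I01 (\<lambda>x. (u x)\<^sup>2 / (a x * b x))"
proof (rule I01_le_mult_I01[OF int])
  fix x :: real assume x: "x \<in> {0..1}"
  show "0 \<le> (u x)\<^sup>2 / a x" using ab[OF x] u0 by (cases "x = x0") auto
  show "(u x)\<^sup>2 / a x \<le> M * ((u x)\<^sup>2 / (a x * b x))"
  proof (cases "x = x0")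
    case False
    then have "(u x)\<^sup>2 / a x = b x * ((u x)\<^sup>2 / (a x * b x))" using ab[OF x] by simp
    also have "\<dots> \<le> M * ((u x)\<^sup>2 / (a x * b x))" using ab[OF x False] by (intro mult_right_mono) auto
    finally show ?thesis .
  qed (simp add: u0)
qed

lemma Hardy_Poincare_weak:
  fixes a b :: "real \<Rightarrow> real"
  assumes x0: "0 < x0" "x0 < 1" and K: "0 < K1" "0 < K2" "K1 + K2 < 1"
    and a: "0 < ca" "\<And>x. x \<in> {0..1} \<Longrightarrow> ca * \<bar>x - x0\<bar> powr K1 \<le> a x"
    and b: "0 < cb" "\<And>x. x \<in> {0..1} \<Longrightarrow> cb * \<bar>x - x0\<bar> powr K2 \<le> b x"
  shows "\<exists>C\<ge>0. \<forall>u u'. H10 u u' \<longrightarrow>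
    I01 (\<lambda>x. (u x)\<^sup>2 / (a x * b x)) \<le> C * I01 (\<lambda>x. (u' x)\<^sup>2) \<and>
    I01 (\<lambda>x. (u x)\<^sup>2 / a x) \<le> C * I01 (\<lambda>x. (u' x)\<^sup>2)"
proof -
  define J where "J \<gamma> = x0 powr (1 - \<gamma>) / (1 - \<gamma>) + (1 - x0) powr (1 - \<gamma>) / (1 - \<gamma>)" for \<gamma>
  define C where "C = J (K1 + K2) / (ca * cb) + J K1 / ca"
  have J: "0 \<le> J \<gamma>" if "\<gamma> < 1" for \<gamma> using that by (simp add: J_def)
  have a0: "0 \<le> a x" if "x \<in> {0..1}" for x using a(1) order_trans[OF _ a(2)[OF that]] by simp
  have ab: "ca * cb * \<bar>x - x0\<bar> powr (K1 + K2) \<le> a x * b x" if "x \<in> {0..1}" for x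
    using mult_mono[OF a(2)[OF that] b(2)[OF that]] a(1) b(1) a0[OF that] by (simp add: powr_add mult_ac)
  have "I01 (\<lambda>x. (u x)\<^sup>2 / (a x * b x)) \<le> C * I01 (\<lambda>x. (u' x)\<^sup>2) \<and>
      I01 (\<lambda>x. (u x)\<^sup>2 / a x) \<le> C * I01 (\<lambda>x. (u' x)\<^sup>2)" if H: "H10 u u'" for u u'
  proof -
    have B: "0 \<le> I01 (\<lambda>x. (u' x)\<^sup>2)" by (simp add: I01_nonneg)
    have "I01 (\<lambda>x. (u x)\<^sup>2 / (a x * b x)) \<le> I01 (\<lambda>x. (u' x)\<^sup>2) / (ca * cb) * J (K1 + K2)"
      unfolding J_def using x0 K a(1) b(1) ab by (intro I01_sq_div_weight_le H10_sq_le[OF H]) auto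
    moreover have "I01 (\<lambda>x. (u x)\<^sup>2 / a x) \<le> I01 (\<lambda>x. (u' x)\<^sup>2) / ca * J K1"
      unfolding J_def using x0 K a by (intro I01_sq_div_weight_le H10_sq_le[OF H]) auto
    moreover have "0 \<le> I01 (\<lambda>x. (u' x)\<^sup>2) / (ca * cb) * J (K1 + K2)" "0 \<le> I01 (\<lambda>x. (u' x)\<^sup>2) / ca * J K1"
      using B a(1) b(1) J K by auto
    ultimately show ?thesis by (simp add: C_def distrib_left field_simps)
  qed
  moreover have "0 \<le> C" using J K a(1) b(1) by (simp add: C_def)
  ultimately show ?thesis by blast
qed

lemma Hardy_Poincare_strong:
  fixes a b :: "real \<Rightarrow> real"
  assumes x0: "0 < x0" "x0 < 1" and K: "K1 + K2 \<le> 2"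
    and a: "0 < ca" "\<And>x. x \<in> {0..1} \<Longrightarrow> ca * \<bar>x - x0\<bar> powr K1 \<le> a x"
    and b: "0 < cb" "\<And>x. x \<in> {0..1} \<Longrightarrow> cb * \<bar>x - x0\<bar> powr K2 \<le> b x"
    and ab: "\<And>x. x \<in> {0..1} \<Longrightarrow> a x * b x \<le> C * \<bar>x - x0\<bar>"
    and b_le: "\<And>x. x \<in> {0..1} \<Longrightarrow> b x \<le> Mb"
  shows "\<exists>C\<ge>0. \<forall>u u'. Kab_mem a b u u' \<longrightarrow>
    I01 (\<lambda>x. (u x)\<^sup>2 / (a x * b x)) \<le> C * I01 (\<lambda>x. (u' x)\<^sup>2) \<and>
    I01 (\<lambda>x. (u x)\<^sup>2 / a x) \<le> C * I01 (\<lambda>x. (u' x)\<^sup>2)"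
proof -
  define C0 where "C0 = 8 / (ca * cb)"
  have C0: "0 \<le> C0" using a(1) b(1) by (simp add: C0_def)
  have pos: "0 < a x" "0 < b x" if "x \<in> {0..1}" "x \<noteq> x0" for x
    using a(1) b(1) that order_less_le_trans[OF _ a(2)] order_less_le_trans[OF _ b(2)] by auto
  have Mb: "0 \<le> Mb" using pos[of 1] b_le[of 1] x0 by simp
  have "I01 (\<lambda>x. (u x)\<^sup>2 / (a x * b x)) \<le> (1 + Mb) * C0 * I01 (\<lambda>x. (u' x)\<^sup>2) \<and>
      I01 (\<lambda>x. (u x)\<^sup>2 / a x) \<le> (1 + Mb) * C0 * I01 (\<lambda>x. (u' x)\<^sup>2)" if Kab: "Kab_mem a b u u'" for u u'
  proof -
    have H: "H10 u u'" and int: "set_integrable lborel {0..1} (\<lambda>x. (u x)\<^sup>2 / (a x * b x))"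
      using Kab unfolding Kab_mem_def Ka_mem_def by auto
    have u0: "u x0 = 0"
      by (rule vanishes_if_set_integrable_sq_div_weight[OF W11_deriv_continuous_on[OF H10_imp_W11_deriv[OF H]] _ _ _ int])
        (use x0 pos ab in auto)
    have A: "I01 (\<lambda>x. (u x)\<^sup>2 / (a x * b x)) \<le> C0 * I01 (\<lambda>x. (u' x)\<^sup>2)"
      unfolding C0_def using x0 K a b
      by (intro I01_sq_div_le_Hardy[OF H x0 u0] weights_mult_ge_sq) (auto intro: order_trans[OF _ a(2)] order_trans[OF _ b(2)])
    have "I01 (\<lambda>x. (u x)\<^sup>2 / a x) \<le> Mb * I01 (\<lambda>x. (u x)\<^sup>2 / (a x * b x))"
      using pos b_le by (intro I01_sq_div_le_mult_I01_sq_div_mult[OF int u0]) auto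
    also have "\<dots> \<le> Mb * (C0 * I01 (\<lambda>x. (u' x)\<^sup>2))" by (rule mult_left_mono[OF A Mb])
    moreover have "0 \<le> C0 * I01 (\<lambda>x. (u' x)\<^sup>2)" "0 \<le> Mb * (C0 * I01 (\<lambda>x. (u' x)\<^sup>2))"
      using C0 Mb by (simp_all add: I01_nonneg)
    ultimately show ?thesis using A by (simp add: algebra_simps)
  qed
  moreover have "0 \<le> (1 + Mb) * C0" using C0 Mb by simp
  ultimately show ?thesis by blast
qed

lemma Hardy_Poincare_K:
  assumes x0: "0 < x0" "x0 < 1" and ab: "basic_ab x0 a b" and H: "condH x0 a b K1 K2"
  shows "\<exists>C>0. \<forall>u u'. K_mem x0 a b K1 K2 u u' \<longrightarrow>
    I01 (\<lambda>x. (u x)\<^sup>2 / (a x * b x)) \<le> C * I01 (\<lambda>x. (u' x)\<^sup>2) \<and>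
    K_normsq x0 a b K1 K2 u u' \<le> C * I01 (\<lambda>x. (u' x)\<^sup>2)"
proof -
  obtain ca cb where
    a: "0 < ca" "\<And>x. x \<in> {0..1} \<Longrightarrow> ca * \<bar>x - x0\<bar> powr K1 \<le> a x" and
    b: "0 < cb" "\<And>x. x \<in> {0..1} \<Longrightarrow> cb * \<bar>x - x0\<bar> powr K2 \<le> b x"
    using condH_weights_lower_bound(3,4)[OF x0 ab H] by blast
  obtain C where C: "0 \<le> C" and bounds: "\<And>u u'. K_mem x0 a b K1 K2 u u' \<Longrightarrow>
      I01 (\<lambda>x. (u x)\<^sup>2 / (a x * b x)) \<le> C * I01 (\<lambda>x. (u' x)\<^sup>2) \<and>
      I01 (\<lambda>x. (u x)\<^sup>2 / a x) \<le> C * I01 (\<lambda>x. (u' x)\<^sup>2)"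
  proof (cases "H1 x0 a b K1 K2")
    case True
    then have "K1 + K2 < 1" by (simp add: H1_def)
    with Hardy_Poincare_weak[OF x0 condH_weights_lower_bound(1,2)[OF x0 ab H] this a b] True that
    show ?thesis unfolding K_mem_def Ka_mem_def by auto
  next
    case False
    then have "K1 + K2 \<le> 2" using H unfolding condH_def H2_def H3_def H4_def by auto
    moreover obtain Cab where "\<forall>x\<in>{0..1}. a x * b x \<le> Cab * \<bar>x - x0\<bar>"
      using condH_weights_mult_le[OF x0 ab H False] by blast
    moreover obtain Mb where "\<forall>x\<in>{0..1}. b x \<le> Mb"
      using degenerate_bounded_above H unfolding condH_def H1_def H2_def H3_def H4_def by metis
    ultimately obtain C where "0 \<le> C" "\<forall>u u'. Kab_mem a b u u' \<longrightarrow>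
        I01 (\<lambda>x. (u x)\<^sup>2 / (a x * b x)) \<le> C * I01 (\<lambda>x. (u' x)\<^sup>2) \<and>
        I01 (\<lambda>x. (u x)\<^sup>2 / a x) \<le> C * I01 (\<lambda>x. (u' x)\<^sup>2)"
      using Hardy_Poincare_strong[OF x0 _ a b, of Cab Mb] by blast
    with False that show ?thesis unfolding K_mem_def by auto
  qed
  have "I01 (\<lambda>x. (u x)\<^sup>2 / (a x * b x)) \<le> (2 * C + 1) * I01 (\<lambda>x. (u' x)\<^sup>2) \<and>
      K_normsq x0 a b K1 K2 u u' \<le> (2 * C + 1) * I01 (\<lambda>x. (u' x)\<^sup>2)" if u: "K_mem x0 a b K1 K2 u u'" for u u'
  proof -
    have "0 \<le> I01 (\<lambda>x. (u' x)\<^sup>2)" by (simp add: I01_nonneg)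
    moreover from this have "0 \<le> C * I01 (\<lambda>x. (u' x)\<^sup>2)" using C by simp
    moreover have "(2 * C + 1) * I01 (\<lambda>x. (u' x)\<^sup>2) = 2 * (C * I01 (\<lambda>x. (u' x)\<^sup>2)) + I01 (\<lambda>x. (u' x)\<^sup>2)"
      by (simp add: algebra_simps)
    ultimately show ?thesis using bounds[OF u] unfolding K_normsq_def by auto
  qed
  moreover have "0 < 2 * C + 1" using C by simp
  ultimately show ?thesis by blast
qed

section \<open>Coercivity\<close>

lemma le_Inf_mult_if_bounded:
  fixes A B :: "'a \<Rightarrow> 'b \<Rightarrow> real"
  assumes A: "\<And>u v. P u v \<Longrightarrow> 0 \<le> A u v" and C: "0 < C" "\<And>u v. P u v \<Longrightarrow> A u v \<le> C * B u v"
    and P: "P u v"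
  shows "A u v \<le> Inf {c. \<forall>u v. P u v \<longrightarrow> A u v \<le> c * B u v} * B u v"
proof (cases "0 < B u v")
  case True
  have "A u v / B u v \<le> Inf {c. \<forall>u v. P u v \<longrightarrow> A u v \<le> c * B u v}"
  proof (rule cInf_greatest)
    show "{c. \<forall>u v. P u v \<longrightarrow> A u v \<le> c * B u v} \<noteq> {}" using C(2) by blast
  qed (use P True in \<open>auto simp: pos_divide_le_eq\<close>)
  then show ?thesis using True by (simp add: pos_divide_le_eq)
next
  case False
  have "0 \<le> C * B u v" using A[OF P] C(2)[OF P] by linarith
  then have "B u v = 0" using False C(1) by (simp add: zero_le_mult_iff)
  then show ?thesis using A[OF P] C(2)[OF P] by simp
qed

lemma coercive_if_less_inverse_Inf:
  fixes A B N :: "'a \<Rightarrow> 'b \<Rightarrow> real"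
  assumes A: "\<And>u v. P u v \<Longrightarrow> 0 \<le> A u v"
    and C: "0 < C" "\<And>u v. P u v \<Longrightarrow> A u v \<le> C * B u v \<and> N u v \<le> C * B u v"
    and lam: "lam < 1 / Inf {c. \<forall>u v. P u v \<longrightarrow> A u v \<le> c * B u v}"
  shows "\<exists>\<Lambda>>0. \<forall>u v. P u v \<longrightarrow> \<Lambda> * N u v \<le> B u v - lam * A u v"
proof -
  define Cs where "Cs = Inf {c. \<forall>u v. P u v \<longrightarrow> A u v \<le> c * B u v}"
  have A_le: "A u v \<le> Cs * B u v" if "P u v" for u v
    unfolding Cs_def using A C that by (intro le_Inf_mult_if_bounded) auto
  show ?thesis
  proof (cases "lam \<le> 0")
    case True
    have "1 / C * N u v \<le> B u v - lam * A u v" if "P u v" for u v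
    proof -
      have "1 / C * N u v \<le> B u v" using C(2)[OF that] C(1) by (simp add: field_simps)
      moreover have "lam * A u v \<le> 0" using A[OF that] True by (simp add: mult_nonpos_nonneg)
      ultimately show ?thesis by linarith
    qed
    then show ?thesis using C(1) by (intro exI[of _ "1 / C"]) auto
  next
    case False
    then have "0 < 1 / Cs" using lam unfolding Cs_def by linarith
    then have "0 < Cs" by simp
    then have "lam * Cs < 1" using lam by (simp add: Cs_def less_divide_eq)
    have "(1 - lam * Cs) / C * N u v \<le> B u v - lam * A u v" if "P u v" for u v
    proof -
      have "(1 - lam * Cs) / C * N u v \<le> (1 - lam * Cs) / C * (C * B u v)"
        using C(2)[OF that] C(1) \<open>lam * Cs < 1\<close> by (intro mult_left_mono) auto
      also have "\<dots> = (1 - lam * Cs) * B u v" using C(1) by simp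
      also have "\<dots> \<le> B u v - lam * A u v"
        using A_le[OF that] False by (simp add: algebra_simps)
      finally show ?thesis .
    qed
    then show ?thesis using C(1) \<open>lam * Cs < 1\<close> by (intro exI[of _ "(1 - lam * Cs) / C"]) auto
  qed
qed

theorem proposition3p5:
  fixes x0 K1 K2 lam :: real and a b :: "real \<Rightarrow> real"
  assumes "0 < x0" "x0 < 1"
    and "basic_ab x0 a b"
    and "condH x0 a b K1 K2"
    and "lam \<noteq> 0"
    and "lam < 1 / C_star x0 a b K1 K2"
  shows "\<exists>\<Lambda>>0. \<forall>u u'. K_mem x0 a b K1 K2 u u' \<longrightarrow>
           I01 (\<lambda>x. (u' x)\<^sup>2) - lam * I01 (\<lambda>x. (u x)\<^sup>2 / (a x * b x))
             \<ge> \<Lambda> * K_normsq x0 a b K1 K2 u u'"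
proof -
  obtain C where "0 < C" and bounds: "\<And>u u'. K_mem x0 a b K1 K2 u u' \<Longrightarrow>
      I01 (\<lambda>x. (u x)\<^sup>2 / (a x * b x)) \<le> C * I01 (\<lambda>x. (u' x)\<^sup>2) \<and>
      K_normsq x0 a b K1 K2 u u' \<le> C * I01 (\<lambda>x. (u' x)\<^sup>2)"
    using Hardy_Poincare_K[OF assms(1-4)] by blast
  have "0 \<le> I01 (\<lambda>x. (u x)\<^sup>2 / (a x * b x))" if "K_mem x0 a b K1 K2 u u'" for u u'
    using basic_ab_nonneg[OF assms(3)] by (intro I01_nonneg) simp
  from coercive_if_less_inverse_Inf[where P = "K_mem x0 a b K1 K2" and N = "K_normsq x0 a b K1 K2"
      and A = "\<lambda>u u'. I01 (\<lambda>x. (u x)\<^sup>2 / (a x * b x))" and B = "\<lambda>u u'. I01 (\<lambda>x. (u' x)\<^sup>2)",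
      OF this \<open>0 < C\<close> bounds] assms(6)
  show ?thesis unfolding C_star_def by simp
qed

end
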